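(* Consider the waning-immunity model described in the context, and suppose $(\omega_n+\mu)(\mu+r)<\beta_0\omega_n+\beta_n\mu$. Then, provided $\delta\ge0$ is sufficiently small, the endemic equilibrium of the system (the unique equilibrium with $I^*\in(0,1]$) is locally asymptotically stable.
   Context: Model: Fix an integer $n\ge 1$ and parameters $\delta\ge 0$ (rate of waning immunity), $\omega\ge 0$ (vaccination rate), $r>0$ (recovery rate), $\mu>0$ (birth = death rate), coverages $p_0=0$, $p_1,\dots,p_n\in[0,1]$, and transmission rates $0\le\beta_0\le\beta_1\le\dots\le\beta_n$ with $\beta_0<\beta_n$. Write $\omega_i=p_i\omega$, $\delta_i=(1-p_i)\delta$ (so $\delta_0=\delta$). The ODE system for $(S_0,\dots,S_n,I)$ is $$S_0'=\sum_{i=1}^n\omega_iS_i-\delta S_0+rI-\beta_0IS_0-\mu S_0,$$ $$S_i'=-\omega_iS_i+\delta_{i-1}S_{i-1}-\delta_iS_i-\beta_iIS_i-\mu S_i\quad(1\le i\le n-1),$$ $$S_n'=\mu-\omega_nS_n+\delta_{n-1}S_{n-1}-\beta_nIS_n-\mu S_n,$$ $$I'=I\sum_{i=0}^n\beta_iS_i-rI-\mu I,$$ with the normalization $\sum_iS_i+I=1$. An endemic equilibrium is an equilibrium $(S_0^*,\dots,S_n^*,I^* )$ of this system satisfying the normalization with $I^*\neq0$. Stability refers to the equilibrium of the $(n+2)$-dimensional ODE system. *)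

theory Defs
  imports "HOL-Analysis.Analysis"
begin

text \<open>State: S :: nat => real (components S 0 .. S n are used)
  and I :: real. Parameters: n, delta, omega, r, mu, coverages p, transmission rates beta.
  omega_i = p i * omega, delta_i = (1 - p i) * delta.\<close>

definition Sdot :: "nat \<Rightarrow> real \<Rightarrow> real \<Rightarrow> real \<Rightarrow> real \<Rightarrow> (nat \<Rightarrow> real) \<Rightarrow> (nat \<Rightarrow> real)
    \<Rightarrow> (nat \<Rightarrow> real) \<Rightarrow> real \<Rightarrow> nat \<Rightarrow> real" where
  "Sdot n \<delta> \<omega> r \<mu> p \<beta> S I i =
     (if i = 0 then
        (\<Sum>j=1..n. (p j * \<omega>) * S j) - \<delta> * S 0 + r * I - \<beta> 0 * I * S 0 - \<mu> * S 0
      else if i < n then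
        - (p i * \<omega>) * S i + ((1 - p (i - 1)) * \<delta>) * S (i - 1) - ((1 - p i) * \<delta>) * S i
          - \<beta> i * I * S i - \<mu> * S i
      else
        \<mu> - (p n * \<omega>) * S n + ((1 - p (n - 1)) * \<delta>) * S (n - 1) - \<beta> n * I * S n - \<mu> * S n)"

definition Idot :: "nat \<Rightarrow> real \<Rightarrow> real \<Rightarrow> (nat \<Rightarrow> real) \<Rightarrow> (nat \<Rightarrow> real) \<Rightarrow> real \<Rightarrow> real" where
  "Idot n r \<mu> \<beta> S I = I * (\<Sum>i=0..n. \<beta> i * S i) - r * I - \<mu> * I"

definition ode_sol :: "nat \<Rightarrow> real \<Rightarrow> real \<Rightarrow> real \<Rightarrow> real \<Rightarrow> (nat \<Rightarrow> real) \<Rightarrow> (nat \<Rightarrow> real)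
    \<Rightarrow> real set \<Rightarrow> (real \<Rightarrow> nat \<Rightarrow> real) \<Rightarrow> (real \<Rightarrow> real) \<Rightarrow> bool" where
  "ode_sol n \<delta> \<omega> r \<mu> p \<beta> D S I \<longleftrightarrow>
     (\<forall>t\<in>D. (\<forall>i\<le>n. ((\<lambda>\<tau>. S \<tau> i) has_real_derivative Sdot n \<delta> \<omega> r \<mu> p \<beta> (S t) (I t) i) (at t within D))
       \<and> (I has_real_derivative Idot n r \<mu> \<beta> (S t) (I t)) (at t within D))"

definition is_equilibrium :: "nat \<Rightarrow> real \<Rightarrow> real \<Rightarrow> real \<Rightarrow> real \<Rightarrow> (nat \<Rightarrow> real) \<Rightarrow> (nat \<Rightarrow> real)
    \<Rightarrow> (nat \<Rightarrow> real) \<Rightarrow> real \<Rightarrow> bool" where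
  "is_equilibrium n \<delta> \<omega> r \<mu> p \<beta> S I \<longleftrightarrow>
     (\<forall>i\<le>n. Sdot n \<delta> \<omega> r \<mu> p \<beta> S I i = 0) \<and> Idot n r \<mu> \<beta> S I = 0"

definition endemic_eq :: "nat \<Rightarrow> real \<Rightarrow> real \<Rightarrow> real \<Rightarrow> real \<Rightarrow> (nat \<Rightarrow> real) \<Rightarrow> (nat \<Rightarrow> real)
    \<Rightarrow> (nat \<Rightarrow> real) \<Rightarrow> real \<Rightarrow> bool" where
  "endemic_eq n \<delta> \<omega> r \<mu> p \<beta> S I \<longleftrightarrow>
     is_equilibrium n \<delta> \<omega> r \<mu> p \<beta> S I \<and> (\<Sum>i=0..n. S i) + I = 1 \<and> 0 < I \<and> I \<le> 1"

definition loc_asymp_stable :: "nat \<Rightarrow> real \<Rightarrow> real \<Rightarrow> real \<Rightarrow> real \<Rightarrow> (nat \<Rightarrow> real) \<Rightarrow> (nat \<Rightarrow> real)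
    \<Rightarrow> (nat \<Rightarrow> real) \<Rightarrow> real \<Rightarrow> bool" where
  "loc_asymp_stable n \<delta> \<omega> r \<mu> p \<beta> Se Ie \<longleftrightarrow>
     (\<forall>\<epsilon>>0. \<exists>\<eta>>0. \<forall>T>0. \<forall>S I.
        ode_sol n \<delta> \<omega> r \<mu> p \<beta> {0..<T} S I \<and> (\<forall>i\<le>n. \<bar>S 0 i - Se i\<bar> < \<eta>) \<and> \<bar>I 0 - Ie\<bar> < \<eta>
        \<longrightarrow> (\<forall>t\<in>{0..<T}. (\<forall>i\<le>n. \<bar>S t i - Se i\<bar> < \<epsilon>) \<and> \<bar>I t - Ie\<bar> < \<epsilon>))
   \<and> (\<exists>\<eta>>0. \<forall>S I.
        ode_sol n \<delta> \<omega> r \<mu> p \<beta> {0..} S I \<and> (\<forall>i\<le>n. \<bar>S 0 i - Se i\<bar> < \<eta>) \<and> \<bar>I 0 - Ie\<bar> < \<eta>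
        \<longrightarrow> (\<forall>i\<le>n. ((\<lambda>t. S t i) \<longlongrightarrow> Se i) at_top) \<and> (I \<longlongrightarrow> Ie) at_top)"

end

theory Submission
  imports Defs
begin

text \<open>For small \<delta> the equations S_i' = 0 (0 < i \<le> n) express S_1, ..., S_n through S_0 and I,
  and the normalisation then fixes S_0. What remains is one scalar equation in I, a continuous
  O(\<delta>) perturbation of its version for \<delta> = 0. The hypothesis
  (\<omega>_n + \<mu>)(\<mu> + r) < \<beta>_0 \<omega>_n + \<beta>_n \<mu> says precisely that the residual for \<delta> = 0 is
  positive at I = 0; it is at most -r at I = 1, so the intermediate value theorem yields an
  endemic equilibrium.

  Stability and uniqueness come from a quadratic Lyapunov function of the deviations
  u_i = S_i - S_i*, w = I - I* and of the total deviation z = \<Sum>u_i + w, which satisfies z' = -\<mu> z: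
  V = k/2 u_n^2 + w^2/(2 I*) + \<epsilon> u_n w + B/2 (\<Sum>_{0<i<n} u_i^2 + z^2), where u_0 is controlled
  through z. The weight k = (\<beta>_n - \<beta>_0)/(\<beta>_n S_n*) cancels the indefinite u_n w terms of V',
  the small \<epsilon> produces a negative w^2 term, a large B absorbs the remaining cross terms, and
  the terms caused by waning immunity are O(\<delta>) because S_i* = O(\<delta>) for 0 < i < n. Hence
  V' \<le> -c V near the equilibrium, and V decays exponentially. At a second equilibrium the
  same estimate, with I* replaced by that equilibrium's I in the weight of w^2, forces all
  deviations to vanish.\<close>

lemma sum_first_middle_last:
  fixes f :: "nat \<Rightarrow> 'a::comm_monoid_add"
  assumes "1 \<le> n"
  shows "(\<Sum>i=0..n. f i) = f 0 + (\<Sum>i\<in>{1..<n}. f i) + f n"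
proof -
  have "{0..n} = insert 0 (insert n {1..<n})" using assms by auto
  then show ?thesis using assms by (simp add: ac_simps)
qed

lemma total_population_deriv:
  assumes n_pos: "1 \<le> n" and p_0: "p 0 = 0"
  shows "(\<Sum>i=0..n. Sdot n \<delta> \<omega> r \<mu> p \<beta> S I i) + Idot n r \<mu> \<beta> S I
         = \<mu> - \<mu> * ((\<Sum>i=0..n. S i) + I)"
proof -
  obtain m where m: "n = Suc m" using n_pos by (cases n) auto
  define g where "g i = (1 - p i) * \<delta> * S i" for i
  have telescope: "(\<Sum>i\<in>{1..<n}. g (i - 1) - g i) = g 0 - g m"
  proof -
    have "(\<Sum>i\<in>{Suc 0..<Suc m}. g (i - 1) - g i) = (\<Sum>i<m. g i - g (Suc i))"
      by (simp only: sum.shift_bounds_Suc_ivl atLeast0LessThan diff_Suc_1)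
    then show ?thesis by (simp add: m sum_lessThan_telescope')
  qed
  have mid: "(\<Sum>i\<in>{1..<n}. Sdot n \<delta> \<omega> r \<mu> p \<beta> S I i)
     = (g 0 - g m) - (\<Sum>i\<in>{1..<n}. (p i * \<omega>) * S i) - I * (\<Sum>i\<in>{1..<n}. \<beta> i * S i)
       - \<mu> * (\<Sum>i\<in>{1..<n}. S i)"
  proof -
    have "(\<Sum>i\<in>{1..<n}. Sdot n \<delta> \<omega> r \<mu> p \<beta> S I i)
       = (\<Sum>i\<in>{1..<n}. (g (i - 1) - g i) - (p i * \<omega>) * S i - I * (\<beta> i * S i) - \<mu> * S i)"
      by (rule sum.cong) (auto simp: Sdot_def g_def algebra_simps)
    then show ?thesis
      using telescope by (simp add: sum_subtractf sum_distrib_left)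
  qed
  have first: "(\<Sum>j=1..n. (p j * \<omega>) * S j) = (\<Sum>i\<in>{1..<n}. (p i * \<omega>) * S i) + p n * \<omega> * S n"
    using n_pos by (simp add: atLeastLessThanSuc_atLeastAtMost[symmetric] m)
  have S0: "Sdot n \<delta> \<omega> r \<mu> p \<beta> S I 0
      = (\<Sum>j=1..n. (p j * \<omega>) * S j) - \<delta> * S 0 + r * I - \<beta> 0 * I * S 0 - \<mu> * S 0"
    by (simp add: Sdot_def)
  have Sn: "Sdot n \<delta> \<omega> r \<mu> p \<beta> S I n
      = \<mu> - (p n * \<omega>) * S n + g (n - 1) - \<beta> n * I * S n - \<mu> * S n"
    using n_pos by (simp add: Sdot_def g_def)
  show ?thesis
    unfolding sum_first_middle_last[OF n_pos, of "Sdot n \<delta> \<omega> r \<mu> p \<beta> S I"] mid S0 Sn first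
      sum_first_middle_last[OF n_pos, of S] Idot_def sum_first_middle_last[OF n_pos, of "\<lambda>i. \<beta> i * S i"]
    using p_0 m by (simp add: g_def algebra_simps)
qed

lemma endemic_eq_facts:
  assumes "endemic_eq n \<delta> \<omega> r \<mu> p \<beta> Se Ie"
  shows "\<forall>i\<le>n. Sdot n \<delta> \<omega> r \<mu> p \<beta> Se Ie i = 0" "(\<Sum>i=0..n. \<beta> i * Se i) = r + \<mu>"
    "(\<Sum>i=0..n. Se i) + Ie = 1" "0 < Ie" "Ie \<le> 1"
proof -
  show "\<forall>i\<le>n. Sdot n \<delta> \<omega> r \<mu> p \<beta> Se Ie i = 0" "(\<Sum>i=0..n. Se i) + Ie = 1" "0 < Ie" "Ie \<le> 1"
    using assms unfolding endemic_eq_def is_equilibrium_def by auto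
  have "Ie * ((\<Sum>i=0..n. \<beta> i * Se i) - r - \<mu>) = 0"
    using assms unfolding endemic_eq_def is_equilibrium_def Idot_def by (simp add: algebra_simps)
  with \<open>0 < Ie\<close> show "(\<Sum>i=0..n. \<beta> i * Se i) = r + \<mu>" by simp
qed

lemma ode_sol_subset:
  assumes "ode_sol n \<delta> \<omega> r \<mu> p \<beta> D S I" and "D' \<subseteq> D"
  shows "ode_sol n \<delta> \<omega> r \<mu> p \<beta> D' S I"
  using assms unfolding ode_sol_def by (blast intro: DERIV_subset)

lemma DERIV_nonpos_below_level_imp_le_initial:
  fixes h h' :: "real \<Rightarrow> real"
  assumes der: "\<And>t. t \<in> {0..<T} \<Longrightarrow> (h has_real_derivative h' t) (at t within {0..<T})"
    and nonpos: "\<And>t. t \<in> {0..<T} \<Longrightarrow> h t \<le> M \<Longrightarrow> h' t \<le> 0"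
    and h0: "h 0 < M"
    and t1: "t1 \<in> {0..<T}"
  shows "h t1 \<le> h 0"
proof (rule ccontr)
  assume "\<not> h t1 \<le> h 0"
  define L where "L = min (h t1) M"
  have L: "h 0 < L" "L \<le> M" "L \<le> h t1" using \<open>\<not> h t1 \<le> h 0\<close> h0 by (auto simp: L_def)
  have "{0..t1} \<subseteq> {0..<T}" using t1 by auto
  then have cont1: "continuous_on {0..t1} h"
    using continuous_on_subset[OF DERIV_continuous_on[OF der]] by blast
  define K where "K = {0..t1} \<inter> h -` {L..}"
  have "closed K" unfolding K_def by (rule continuous_closed_preimage[OF cont1]) auto
  moreover have "bounded K" unfolding K_def by (rule bounded_subset[of "{0..t1}"]) auto
  ultimately have cK: "compact K" using compact_eq_bounded_closed by blast
  have "t1 \<in> K" using t1 L by (auto simp: K_def)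
  \<comment> \<open>b is the first time at which h reaches the level L\<close>
  then obtain b where b: "b \<in> K" "\<And>y. y \<in> K \<Longrightarrow> b \<le> y"
    using compact_attains_inf[OF cK] by blast
  have b0: "0 \<le> b" "b \<le> t1" "L \<le> h b" using b(1) by (auto simp: K_def)
  have below: "h s < L" if "0 \<le> s" "s < b" for s
  proof (rule ccontr)
    assume "\<not> h s < L"
    hence "s \<in> K" using that b0 by (auto simp: K_def)
    with b(2) that show False by fastforce
  qed
  have "h b \<le> h 0"
  proof (rule DERIV_nonpos_imp_decreasing_open[OF b0(1)])
    fix x assume x: "0 < x" "x < b"
    have xT: "x \<in> {0..<T}" and "x \<in> interior {0..<T}" using x b0 t1 by auto
    then have "(h has_real_derivative h' x) (at x)" using der[OF xT] at_within_interior by metis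
    moreover have "h' x \<le> 0" using nonpos[OF xT] below[of x] x L by auto
    ultimately show "\<exists>y. (h has_real_derivative y) (at x) \<and> y \<le> 0" by blast
  next
    show "continuous_on {0..b} h" using continuous_on_subset[OF cont1] b0 by auto
  qed
  with b0 L show False by linarith
qed

lemma tendsto_0_if_power2_le:
  fixes f g :: "'a \<Rightarrow> real"
  assumes "\<forall>\<^sub>F t in F. (f t)\<^sup>2 \<le> g t" and "(g \<longlongrightarrow> 0) F"
  shows "(f \<longlongrightarrow> 0) F"
proof (rule Lim_null_comparison)
  show "((\<lambda>t. sqrt (g t)) \<longlongrightarrow> 0) F" using tendsto_real_sqrt[OF assms(2)] by simp
  show "\<forall>\<^sub>F t in F. norm (f t) \<le> sqrt (g t)"
    using assms(1) by eventually_elim (simp add: real_le_rsqrt)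
qed

lemma mult_le_weighted_squares:
  fixes c x y C e :: real
  assumes "e > 0" "\<bar>c\<bar> \<le> C"
  shows "c * x * y \<le> e * x\<^sup>2 + C\<^sup>2 / (4*e) * y\<^sup>2"
proof -
  have "0 \<le> (2*e*\<bar>x\<bar> - C*\<bar>y\<bar>)\<^sup>2 / (4*e)" using assms by simp
  also have "\<dots> = e * x\<^sup>2 + C\<^sup>2 / (4*e) * y\<^sup>2 - C*\<bar>x\<bar>*\<bar>y\<bar>"
    using assms by (simp add: power2_eq_square field_simps)
  finally have "C*\<bar>x\<bar>*\<bar>y\<bar> \<le> e * x\<^sup>2 + C\<^sup>2 / (4*e) * y\<^sup>2" by simp
  moreover have "c*x*y \<le> \<bar>c\<bar>*\<bar>x\<bar>*\<bar>y\<bar>" by (metis abs_ge_self abs_mult)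
  moreover have "\<bar>c\<bar>*\<bar>x\<bar>*\<bar>y\<bar> \<le> C*\<bar>x\<bar>*\<bar>y\<bar>" using assms by (simp add: mult_right_mono)
  ultimately show ?thesis by linarith
qed

lemma mult_le_half_squares:
  fixes c x y C :: real
  assumes "\<bar>c\<bar> \<le> C"
  shows "c * x * y \<le> C/2 * x\<^sup>2 + C/2 * y\<^sup>2"
proof (cases "C = 0")
  case False
  then have "C > 0" using assms by linarith
  then show ?thesis
    using mult_le_weighted_squares[OF _ assms, of "C/2" x y] by (simp add: power2_eq_square)
qed (use assms in simp)

lemma sum_mult_le_weighted_squares:
  fixes c y :: "nat \<Rightarrow> real" and x C e :: real
  assumes "e > 0" "\<And>i. i \<in> F \<Longrightarrow> \<bar>c i\<bar> \<le> C" "finite F" "card F \<le> m"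
  shows "(\<Sum>i\<in>F. c i * x * y i) \<le> real m * e * x\<^sup>2 + C\<^sup>2 / (4*e) * (\<Sum>i\<in>F. (y i)\<^sup>2)"
proof -
  have "(\<Sum>i\<in>F. c i * x * y i) \<le> (\<Sum>i\<in>F. e * x\<^sup>2 + C\<^sup>2 / (4*e) * (y i)\<^sup>2)"
    by (rule sum_mono) (use mult_le_weighted_squares[OF assms(1) assms(2)] in auto)
  also have "\<dots> = real (card F) * e * x\<^sup>2 + C\<^sup>2 / (4*e) * (\<Sum>i\<in>F. (y i)\<^sup>2)"
    by (simp add: sum.distrib sum_distrib_left)
  also have "\<dots> \<le> real m * e * x\<^sup>2 + C\<^sup>2 / (4*e) * (\<Sum>i\<in>F. (y i)\<^sup>2)"
    using assms(1,4) by (intro add_right_mono mult_right_mono) auto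
  finally show ?thesis .
qed

lemma power2_diff3_le: "(a - b - c - d)\<^sup>2 \<le> 4 * (a\<^sup>2 + b\<^sup>2 + c\<^sup>2 + (d::real)\<^sup>2)"
proof -
  have "4*(a\<^sup>2+b\<^sup>2+c\<^sup>2+d\<^sup>2) - (a - b - c - d)\<^sup>2
      = (a+b)\<^sup>2 + (a+c)\<^sup>2 + (a+d)\<^sup>2 + (b-c)\<^sup>2 + (b-d)\<^sup>2 + (c-d)\<^sup>2"
    by (simp add: power2_eq_square algebra_simps)
  moreover have "0 \<le> (a+b)\<^sup>2 + (a+c)\<^sup>2 + (a+d)\<^sup>2 + (b-c)\<^sup>2 + (b-d)\<^sup>2 + (c-d)\<^sup>2" by simp
  ultimately show ?thesis by linarith
qed

locale waning_immunity =
  fixes n :: nat and \<omega> r \<mu> :: real and p \<beta> :: "nat \<Rightarrow> real"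
  assumes n_pos: "n \<ge> 1" and \<omega>_nonneg: "\<omega> \<ge> 0" and r_pos: "r > 0" and \<mu>_pos: "\<mu> > 0"
    and p_0: "p 0 = 0" and p_range: "\<forall>i\<in>{1..n}. 0 \<le> p i \<and> p i \<le> 1"
    and \<beta>_0_nonneg: "0 \<le> \<beta> 0" and \<beta>_step: "\<forall>i<n. \<beta> i \<le> \<beta> (Suc i)"
    and \<beta>_0_less: "\<beta> 0 < \<beta> n"
    and endemic_cond: "(p n * \<omega> + \<mu>) * (\<mu> + r) < \<beta> 0 * (p n * \<omega>) + \<beta> n * \<mu>"
begin

lemma \<beta>_mono: "i \<le> j \<Longrightarrow> j \<le> n \<Longrightarrow> \<beta> i \<le> \<beta> j"
proof (induction j)
  case (Suc j)
  then show ?case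
    using \<beta>_step by (cases "i = Suc j") (auto intro: order_trans[of _ "\<beta> j"])
qed simp

lemma \<beta>_bounds: "i \<le> n \<Longrightarrow> \<beta> 0 \<le> \<beta> i \<and> \<beta> i \<le> \<beta> n"
  using \<beta>_mono by auto

lemma \<beta>_n_pos: "\<beta> n > 0"
  using \<beta>_0_nonneg \<beta>_0_less by linarith

lemma p_bounds: "i \<le> n \<Longrightarrow> 0 \<le> p i \<and> p i \<le> 1"
  using p_range p_0 by (cases "i = 0") auto

section \<open>Existence of the endemic equilibrium\<close>

definition outflow_n :: "real \<Rightarrow> real" where
  "outflow_n I = p n*\<omega> + \<mu> + \<beta> n*I"

text \<open>For fixed I, the equations S_i' = 0 with 0 < i < n give S_i = equil_ratio \<delta> I i * S_0
  recursively, S_n' = 0 then gives S_n, and the normalisation fixes S_0 = equil_S0 \<delta> I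
  (S0_base I is its value for \<delta> = 0). The remaining equation I' = 0 becomes equil_residual \<delta> I = 0.\<close>

primrec equil_ratio :: "real \<Rightarrow> real \<Rightarrow> nat \<Rightarrow> real" where
  "equil_ratio \<delta> I 0 = 1"
| "equil_ratio \<delta> I (Suc i) =
     equil_ratio \<delta> I i * ((1 - p i)*\<delta>) / (p (Suc i)*\<omega> + (1 - p (Suc i))*\<delta> + \<mu> + \<beta> (Suc i)*I)"

definition equil_mass :: "real \<Rightarrow> real \<Rightarrow> real" where
  "equil_mass \<delta> I = (\<Sum>i<n. equil_ratio \<delta> I i) + (1 - p (n-1))*\<delta>*equil_ratio \<delta> I (n-1)/outflow_n I"

definition S0_base :: "real \<Rightarrow> real" where
  "S0_base I = 1 - I - \<mu>/outflow_n I"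

definition equil_S0 :: "real \<Rightarrow> real \<Rightarrow> real" where
  "equil_S0 \<delta> I = S0_base I / equil_mass \<delta> I"

definition equil_profile :: "real \<Rightarrow> real \<Rightarrow> nat \<Rightarrow> real" where
  "equil_profile \<delta> I i = (if i < n then equil_ratio \<delta> I i * equil_S0 \<delta> I
     else (\<mu> + (1 - p (n-1))*\<delta>*equil_ratio \<delta> I (n-1) * equil_S0 \<delta> I)/outflow_n I)"

definition equil_residual :: "real \<Rightarrow> real \<Rightarrow> real" where
  "equil_residual \<delta> I = (\<Sum>i=0..n. \<beta> i * equil_profile \<delta> I i) - (r + \<mu>)"

lemma class_outflow_ge:
  assumes "i \<le> n" "0 \<le> \<delta>" "0 \<le> I"
  shows "\<mu> \<le> p i*\<omega> + (1 - p i)*\<delta> + \<mu> + \<beta> i*I"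
proof -
  have "0 \<le> p i" "p i \<le> 1" using p_bounds assms by auto
  moreover have "0 \<le> \<beta> i" using \<beta>_bounds[of i] \<beta>_0_nonneg assms by auto
  ultimately have "0 \<le> p i*\<omega>" "0 \<le> (1 - p i)*\<delta>" "0 \<le> \<beta> i*I" using \<omega>_nonneg assms by auto
  thus ?thesis by linarith
qed

lemma equil_ratio_bounds:
  assumes d: "0 \<le> \<delta>" "\<delta> \<le> \<mu>/2" and I: "0 \<le> I"
  shows "i \<le> n \<Longrightarrow> 0 \<le> equil_ratio \<delta> I i \<and> equil_ratio \<delta> I i \<le> 1 \<and> (1 \<le> i \<longrightarrow> equil_ratio \<delta> I i \<le> \<delta>/\<mu>)"
proof (induction i)
  case 0 then show ?case by simp
next
  case (Suc i)
  then have IH: "0 \<le> equil_ratio \<delta> I i" "equil_ratio \<delta> I i \<le> 1" by auto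
  define den where "den = p (Suc i)*\<omega> + (1 - p (Suc i))*\<delta> + \<mu> + \<beta> (Suc i)*I"
  have den: "\<mu> \<le> den" unfolding den_def by (rule class_outflow_ge) (use Suc d I in auto)
  have pi: "0 \<le> p i" "p i \<le> 1" using p_bounds Suc by auto
  have a: "0 \<le> (1 - p i)*\<delta>" "(1 - p i)*\<delta> \<le> \<delta>" using pi d by (auto simp: mult_left_le_one_le)
  have q: "(1 - p i)*\<delta>/den \<le> \<delta>/\<mu>" by (rule frac_le) (use a den \<mu>_pos d in auto)
  have q0: "0 \<le> (1 - p i)*\<delta>/den" using a den \<mu>_pos by simp
  have e: "equil_ratio \<delta> I (Suc i) = equil_ratio \<delta> I i * ((1 - p i)*\<delta>/den)" unfolding den_def by simp
  have "equil_ratio \<delta> I (Suc i) \<le> 1 * (\<delta>/\<mu>)" unfolding e using IH q q0 by (intro mult_mono) auto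
  moreover have "\<delta>/\<mu> \<le> 1" using d \<mu>_pos by simp
  moreover have "0 \<le> equil_ratio \<delta> I (Suc i)" unfolding e using mult_nonneg_nonneg[OF IH(1) q0] .
  ultimately show ?case by simp
qed

lemma outflow_n_bounds: "0 \<le> I \<Longrightarrow> I \<le> 1 \<Longrightarrow> \<mu> \<le> outflow_n I \<and> outflow_n I \<le> p n*\<omega> + \<mu> + \<beta> n"
  unfolding outflow_n_def using p_bounds[of n] \<omega>_nonneg \<beta>_n_pos by (auto simp: mult_left_le)

lemma equil_mass_bounds:
  assumes d: "0 \<le> \<delta>" "\<delta> \<le> \<mu>/2" and I: "0 \<le> I" "I \<le> 1"
  shows "1 \<le> equil_mass \<delta> I" "equil_mass \<delta> I \<le> 1 + real n * \<delta>/\<mu>"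
proof -
  have cb: "\<And>i. i \<le> n \<Longrightarrow> 0 \<le> equil_ratio \<delta> I i \<and> equil_ratio \<delta> I i \<le> 1 \<and> (1 \<le> i \<longrightarrow> equil_ratio \<delta> I i \<le> \<delta>/\<mu>)"
    using equil_ratio_bounds[OF d I(1)] by blast
  have outflow: "\<mu> \<le> outflow_n I" using outflow_n_bounds I by blast
  have split: "(\<Sum>i<n. equil_ratio \<delta> I i) = 1 + (\<Sum>i\<in>{1..<n}. equil_ratio \<delta> I i)"
  proof -
    have "{..<n} = insert 0 {1..<n}" using n_pos by auto
    thus ?thesis by simp
  qed
  have mid0: "0 \<le> (\<Sum>i\<in>{1..<n}. equil_ratio \<delta> I i)" using cb by (intro sum_nonneg) auto
  have midle: "(\<Sum>i\<in>{1..<n}. equil_ratio \<delta> I i) \<le> of_nat (card {1..<n}) * (\<delta>/\<mu>)"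
    by (rule sum_bounded_above) (use cb in auto)
  have pn1: "0 \<le> p (n-1)" "p (n-1) \<le> 1" using p_bounds[of "n-1"] by auto
  define t where "t = (1 - p (n-1))*\<delta>*equil_ratio \<delta> I (n-1)/outflow_n I"
  have t0: "0 \<le> t" unfolding t_def using pn1 d cb[of "n-1"] outflow \<mu>_pos by auto
  have tle: "t \<le> \<delta>/\<mu>"
  proof -
    have "(1 - p (n-1))*\<delta>*equil_ratio \<delta> I (n-1) \<le> \<delta>*1"
      using pn1 d cb[of "n-1"] by (intro mult_mono) (auto simp: mult_left_le_one_le)
    thus ?thesis unfolding t_def using outflow \<mu>_pos d pn1 cb[of "n-1"] by (intro frac_le) auto
  qed
  have D: "equil_mass \<delta> I = 1 + (\<Sum>i\<in>{1..<n}. equil_ratio \<delta> I i) + t" unfolding equil_mass_def t_def split by simp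
  show "1 \<le> equil_mass \<delta> I" using D mid0 t0 by linarith
  have "of_nat (card {1..<n}) * (\<delta>/\<mu>) = (real n - 1) * (\<delta>/\<mu>)" using n_pos by (simp add: of_nat_diff)
  hence "(\<Sum>i\<in>{1..<n}. equil_ratio \<delta> I i) + t \<le> real n * (\<delta>/\<mu>)" using midle tle by (simp add: algebra_simps)
  thus "equil_mass \<delta> I \<le> 1 + real n * \<delta>/\<mu>" using D by simp
qed

lemma continuous_on_equil_ratio:
  assumes d: "0 \<le> \<delta>"
  shows "i \<le> n \<Longrightarrow> continuous_on {0..1} (\<lambda>I. equil_ratio \<delta> I i)"
proof (induction i)
  case 0 then show ?case by simp
next
  case (Suc i)
  have IH: "continuous_on {0..1} (\<lambda>I. equil_ratio \<delta> I i)" using Suc by auto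
  have nz: "\<forall>I\<in>{0..1}. p (Suc i)*\<omega> + (1 - p (Suc i))*\<delta> + \<mu> + \<beta> (Suc i)*I \<noteq> 0"
  proof
    fix I :: real assume "I \<in> {0..1}"
    hence "\<mu> \<le> p (Suc i)*\<omega> + (1 - p (Suc i))*\<delta> + \<mu> + \<beta> (Suc i)*I"
      using Suc d by (intro class_outflow_ge) auto
    thus "p (Suc i)*\<omega> + (1 - p (Suc i))*\<delta> + \<mu> + \<beta> (Suc i)*I \<noteq> 0" using \<mu>_pos by linarith
  qed
  have "continuous_on {0..1} (\<lambda>I. equil_ratio \<delta> I i * ((1 - p i)*\<delta>) / (p (Suc i)*\<omega> + (1 - p (Suc i))*\<delta> + \<mu> + \<beta> (Suc i)*I))"
    by (intro continuous_on_divide continuous_on_mult IH continuous_on_const continuous_on_add continuous_on_id nz)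
  then show ?case by simp
qed

lemma continuous_on_equil_residual:
  assumes d: "0 \<le> \<delta>" "\<delta> \<le> \<mu>/2"
  shows "continuous_on {0..1} (equil_residual \<delta>)"
proof -
  have outflow_cont: "continuous_on {0..1} outflow_n" unfolding outflow_n_def by (intro continuous_intros)
  have outflow_nz: "\<forall>I\<in>{0..1}. outflow_n I \<noteq> 0" using outflow_n_bounds \<mu>_pos by force
  have mass_cont: "continuous_on {0..1} (equil_mass \<delta>)" unfolding equil_mass_def[abs_def]
    by (intro continuous_on_add continuous_on_sum continuous_on_divide continuous_on_mult continuous_on_const
        continuous_on_equil_ratio[OF d(1)] outflow_cont outflow_nz) auto
  have mass_nz: "\<forall>I\<in>{0..1}. equil_mass \<delta> I \<noteq> 0" using equil_mass_bounds(1)[OF d] by force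
  have S0_base_cont: "continuous_on {0..1} S0_base" unfolding S0_base_def[abs_def]
    by (intro continuous_on_diff continuous_on_divide continuous_on_const continuous_on_id outflow_cont outflow_nz)
  have S0_cont: "continuous_on {0..1} (equil_S0 \<delta>)" unfolding equil_S0_def[abs_def]
    by (intro continuous_on_divide S0_base_cont mass_cont mass_nz)
  have profile_cont: "continuous_on {0..1} (\<lambda>I. equil_profile \<delta> I i)" if "i \<le> n" for i
  proof (cases "i < n")
    case True
    then show ?thesis unfolding equil_profile_def using that
      by (simp, intro continuous_on_mult continuous_on_equil_ratio[OF d(1)] S0_cont) auto
  next
    case False
    then show ?thesis unfolding equil_profile_def
      by (simp, intro continuous_on_divide continuous_on_add continuous_on_mult continuous_on_const
          continuous_on_equil_ratio[OF d(1)] S0_cont outflow_cont outflow_nz) auto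
  qed
  show ?thesis unfolding equil_residual_def[abs_def]
    by (intro continuous_on_diff continuous_on_sum continuous_on_mult continuous_on_const profile_cont) auto
qed

lemma S0_base_bound: "0 \<le> I \<Longrightarrow> I \<le> 1 \<Longrightarrow> \<bar>S0_base I\<bar> \<le> 1"
proof -
  assume I: "0 \<le> I" "I \<le> 1"
  have outflow: "\<mu> \<le> outflow_n I" using outflow_n_bounds I by blast
  have "0 < \<mu>/outflow_n I" "\<mu>/outflow_n I \<le> 1" using outflow \<mu>_pos by auto
  thus ?thesis unfolding S0_base_def using I by auto
qed

lemma equil_S0_bounds:
  assumes d: "0 \<le> \<delta>" "\<delta> \<le> \<mu>/2" and I: "0 \<le> I" "I \<le> 1"
  shows "\<bar>equil_S0 \<delta> I\<bar> \<le> 1" "\<bar>equil_S0 \<delta> I - S0_base I\<bar> \<le> real n * \<delta>/\<mu>"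
proof -
  have D1: "1 \<le> equil_mass \<delta> I" and D2: "equil_mass \<delta> I \<le> 1 + real n * \<delta>/\<mu>"
    using equil_mass_bounds[OF d I] by auto
  have zb: "\<bar>S0_base I\<bar> \<le> 1" by (rule S0_base_bound[OF I])
  have "\<bar>equil_S0 \<delta> I\<bar> = \<bar>S0_base I\<bar> / equil_mass \<delta> I" unfolding equil_S0_def using D1 by simp
  also have "\<dots> \<le> 1" using zb D1 by (simp add: divide_le_eq)
  finally show "\<bar>equil_S0 \<delta> I\<bar> \<le> 1" .
  have "equil_S0 \<delta> I - S0_base I = S0_base I * (1 - equil_mass \<delta> I) / equil_mass \<delta> I"
    unfolding equil_S0_def using D1 by (simp add: field_simps)
  then have "\<bar>equil_S0 \<delta> I - S0_base I\<bar> = \<bar>S0_base I\<bar> * (equil_mass \<delta> I - 1) / equil_mass \<delta> I"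
    using D1 by (simp add: abs_mult)
  also have "\<dots> \<le> 1 * (equil_mass \<delta> I - 1) / 1" using zb D1 by (intro frac_le mult_mono) auto
  also have "\<dots> \<le> real n * \<delta>/\<mu>" using D2 by simp
  finally show "\<bar>equil_S0 \<delta> I - S0_base I\<bar> \<le> real n * \<delta>/\<mu>" .
qed

lemma equil_inflow_n_bound:
  assumes d: "0 \<le> \<delta>" "\<delta> \<le> \<mu>/2" and I: "0 \<le> I" "I \<le> 1"
  shows "\<bar>(1 - p (n-1))*\<delta>*equil_ratio \<delta> I (n-1) * equil_S0 \<delta> I\<bar> \<le> \<delta>"
proof -
  have pn1: "0 \<le> p (n-1)" "p (n-1) \<le> 1" using p_bounds[of "n-1"] by auto
  have "\<bar>(1 - p (n-1))*\<delta>*equil_ratio \<delta> I (n-1) * equil_S0 \<delta> I\<bar>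
      = ((1 - p (n-1))*\<delta>)*(\<bar>equil_ratio \<delta> I (n-1)\<bar> * \<bar>equil_S0 \<delta> I\<bar>)"
    using pn1 d by (simp add: abs_mult)
  also have "\<dots> \<le> \<delta> * (1*1)"
    using pn1 d equil_ratio_bounds[OF d I(1), of "n-1"] equil_S0_bounds(1)[OF d I]
    by (intro mult_mono) (auto simp: mult_left_le_one_le)
  finally show ?thesis by simp
qed

lemma equil_profile_n:
  "equil_profile \<delta> I n = (\<mu> + (1 - p (n-1))*\<delta>*equil_ratio \<delta> I (n-1) * equil_S0 \<delta> I) / outflow_n I"
  by (simp add: equil_profile_def)

lemma equil_residual_zero_delta:
  "equil_residual 0 I = \<beta> 0 * S0_base I + \<beta> n * \<mu> / outflow_n I - (r + \<mu>)"
proof -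
  have ratio: "equil_ratio 0 I i = (if i = 0 then 1 else 0)" for i by (cases i) simp_all
  have "(\<Sum>i<n. equil_ratio 0 I i) = 1"
    using n_pos by (simp add: ratio sum.delta)
  then have S0: "equil_S0 0 I = S0_base I" by (simp add: equil_S0_def equil_mass_def)
  have mid: "(\<Sum>i\<in>{1..<n}. \<beta> i * equil_profile 0 I i) = 0"
    by (rule sum.neutral) (auto simp: equil_profile_def ratio)
  show ?thesis
    unfolding equil_residual_def sum_first_middle_last[OF n_pos] mid
    using n_pos by (simp add: equil_profile_def S0)
qed

definition Sn_min :: real where
  "Sn_min = \<mu> / (2 * (p n * \<omega> + \<mu> + \<beta> n))"

lemma equil_profile_bounds:
  assumes d: "0 \<le> \<delta>" "\<delta> \<le> \<mu>/2" and I: "0 \<le> I" "I \<le> 1"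
  shows "Sn_min \<le> equil_profile \<delta> I n" "equil_profile \<delta> I n \<le> 2"
    "\<forall>i\<in>{1..<n}. \<bar>equil_profile \<delta> I i\<bar> \<le> \<delta>/\<mu>"
proof -
  define t where "t = (1 - p (n-1))*\<delta>*equil_ratio \<delta> I (n-1) * equil_S0 \<delta> I"
  have t: "\<bar>t\<bar> \<le> \<delta>" unfolding t_def by (rule equil_inflow_n_bound[OF d I])
  have outflow: "\<mu> \<le> outflow_n I" "outflow_n I \<le> p n*\<omega> + \<mu> + \<beta> n"
    using outflow_n_bounds[OF I] by auto
  have "(\<mu>/2) / (p n*\<omega> + \<mu> + \<beta> n) \<le> (\<mu> + t)/outflow_n I"
    using t d outflow \<mu>_pos by (intro frac_le) auto
  then show "Sn_min \<le> equil_profile \<delta> I n"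
    unfolding Sn_min_def equil_profile_n t_def[symmetric] by simp
  have "(\<mu> + t)/outflow_n I \<le> (2*\<mu>)/\<mu>" using t d outflow \<mu>_pos by (intro frac_le) auto
  then show "equil_profile \<delta> I n \<le> 2" unfolding equil_profile_n t_def[symmetric] using \<mu>_pos by simp
  show "\<forall>i\<in>{1..<n}. \<bar>equil_profile \<delta> I i\<bar> \<le> \<delta>/\<mu>"
  proof
    fix i assume i: "i \<in> {1..<n}"
    have "\<bar>equil_profile \<delta> I i\<bar> = \<bar>equil_ratio \<delta> I i\<bar> * \<bar>equil_S0 \<delta> I\<bar>"
      unfolding equil_profile_def using i by (simp add: abs_mult)
    also have "\<dots> \<le> (\<delta>/\<mu>) * 1"
      using equil_ratio_bounds[OF d I(1), of i] i equil_S0_bounds(1)[OF d I] by (intro mult_mono) auto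
    finally show "\<bar>equil_profile \<delta> I i\<bar> \<le> \<delta>/\<mu>" by simp
  qed
qed

lemma mid_force_equil_profile_bound:
  assumes d: "0 \<le> \<delta>" "\<delta> \<le> \<mu>/2" and I: "0 \<le> I" "I \<le> 1"
  shows "\<bar>\<Sum>i\<in>{1..<n}. \<beta> i * equil_profile \<delta> I i\<bar> \<le> \<beta> n * (real n * \<delta>/\<mu>)"
proof -
  have "\<bar>\<Sum>i\<in>{1..<n}. \<beta> i * equil_profile \<delta> I i\<bar> \<le> (\<Sum>i\<in>{1..<n}. \<bar>\<beta> i * equil_profile \<delta> I i\<bar>)"
    by (rule sum_abs)
  also have "\<dots> \<le> of_nat (card {1..<n}) * (\<beta> n * (\<delta>/\<mu>))"
  proof (rule sum_bounded_above)
    fix i assume i: "i \<in> {1..<n}"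
    have "\<bar>\<beta> i\<bar> \<le> \<beta> n" using \<beta>_bounds[of i] \<beta>_0_nonneg i by auto
    then show "\<bar>\<beta> i * equil_profile \<delta> I i\<bar> \<le> \<beta> n * (\<delta>/\<mu>)"
      unfolding abs_mult using equil_profile_bounds(3)[OF d I] i by (intro mult_mono) auto
  qed
  also have "\<dots> \<le> real n * (\<beta> n * (\<delta>/\<mu>))"
    using \<beta>_n_pos d \<mu>_pos by (intro mult_right_mono) auto
  finally show ?thesis by (simp add: mult.left_commute)
qed

lemma equil_residual_close:
  assumes d: "0 \<le> \<delta>" "\<delta> \<le> \<mu>/2" and I: "0 \<le> I" "I \<le> 1"
  shows "\<bar>equil_residual \<delta> I - equil_residual 0 I\<bar> \<le> 3*real n*\<beta> n*\<delta>/\<mu>"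
proof -
  define t where "t = (1 - p (n-1))*\<delta>*equil_ratio \<delta> I (n-1) * equil_S0 \<delta> I"
  define bound where "bound = \<beta> n * (real n * \<delta>/\<mu>)"
  have outflow: "\<mu> \<le> outflow_n I" using outflow_n_bounds I by blast
  have "equil_residual \<delta> I - equil_residual 0 I = \<beta> 0 * (equil_S0 \<delta> I - S0_base I)
      + (\<Sum>i\<in>{1..<n}. \<beta> i * equil_profile \<delta> I i) + \<beta> n * (t / outflow_n I)"
    unfolding equil_residual_zero_delta
    unfolding equil_residual_def sum_first_middle_last[OF n_pos] equil_profile_n t_def
    using n_pos outflow \<mu>_pos by (simp add: equil_profile_def field_simps)
  moreover have "\<bar>\<beta> 0 * (equil_S0 \<delta> I - S0_base I)\<bar> \<le> bound"
    unfolding bound_def abs_mult using \<beta>_0_nonneg \<beta>_0_less equil_S0_bounds(2)[OF d I]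
    by (intro mult_mono) auto
  moreover have "\<bar>\<beta> n * (t / outflow_n I)\<bar> \<le> bound"
  proof -
    have "\<bar>t / outflow_n I\<bar> \<le> \<delta>/\<mu>"
      using equil_inflow_n_bound[OF d I] outflow \<mu>_pos d unfolding t_def
      by (simp add: abs_divide) (intro frac_le, auto)
    also have "\<dots> \<le> real n * \<delta>/\<mu>"
      using n_pos d \<mu>_pos by (simp add: divide_right_mono mult_le_cancel_right1)
    finally have "\<beta> n * \<bar>t / outflow_n I\<bar> \<le> bound"
      unfolding bound_def using \<beta>_n_pos by (intro mult_left_mono) auto
    then show ?thesis using \<beta>_n_pos by (simp add: abs_mult)
  qed
  ultimately have "\<bar>equil_residual \<delta> I - equil_residual 0 I\<bar> \<le> 3 * bound"
    using mid_force_equil_profile_bound[OF d I] unfolding bound_def[symmetric]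
    by (smt (verit) abs_triangle_ineq)
  then show ?thesis by (simp add: bound_def algebra_simps)
qed

lemma equil_residual_zero_delta_at_0: "equil_residual 0 0 > 0"
proof -
  define A where "A = p n*\<omega> + \<mu>"
  have A: "A > 0" unfolding A_def using p_bounds[of n] \<omega>_nonneg \<mu>_pos by (simp add: add_nonneg_pos)
  have "equil_residual 0 0 * A = \<beta> 0 * (p n * \<omega>) + \<beta> n * \<mu> - (p n * \<omega> + \<mu>) * (\<mu> + r)"
    unfolding equil_residual_zero_delta S0_base_def outflow_n_def A_def[symmetric]
    using A by (simp add: field_simps) (simp add: A_def algebra_simps)
  then have "equil_residual 0 0 * A > 0" using endemic_cond by simp
  then show ?thesis using A by (simp add: zero_less_mult_iff)
qed

lemma equil_residual_zero_delta_at_1: "equil_residual 0 1 \<le> -r"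
proof -
  have outflow: "outflow_n 1 = p n*\<omega> + \<mu> + \<beta> n" unfolding outflow_n_def by simp
  have pos: "outflow_n 1 > 0" using outflow_n_bounds[of 1] \<mu>_pos by simp
  have "0 \<le> p n * \<omega>" using p_bounds[of n] \<omega>_nonneg by simp
  then have "\<beta> n - \<beta> 0 \<le> outflow_n 1"
    unfolding outflow using \<mu>_pos \<beta>_0_nonneg by simp
  then have "(\<beta> n - \<beta> 0) * \<mu> / outflow_n 1 \<le> \<mu>"
    using pos \<mu>_pos by (simp add: pos_divide_le_eq mult.commute mult_left_mono)
  moreover have "equil_residual 0 1 = (\<beta> n - \<beta> 0) * \<mu> / outflow_n 1 - r - \<mu>"
    unfolding equil_residual_zero_delta S0_base_def by (simp add: diff_divide_distrib algebra_simps)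
  ultimately show ?thesis by linarith
qed

lemma equil_profile_sum:
  assumes d: "0 \<le> \<delta>" "\<delta> \<le> \<mu>/2" and I: "0 \<le> I" "I \<le> 1"
  shows "(\<Sum>i=0..n. equil_profile \<delta> I i) + I = 1"
proof -
  have outflow: "outflow_n I \<noteq> 0" using outflow_n_bounds[OF I] \<mu>_pos by auto
  have mass: "equil_mass \<delta> I \<noteq> 0" using equil_mass_bounds(1)[OF d I] by simp
  have "(\<Sum>i=0..n. equil_profile \<delta> I i) = (\<Sum>i<n. equil_profile \<delta> I i) + equil_profile \<delta> I n"
    by (simp add: atLeast0AtMost lessThan_Suc_atMost[symmetric])
  also have "(\<Sum>i<n. equil_profile \<delta> I i) = (\<Sum>i<n. equil_ratio \<delta> I i) * equil_S0 \<delta> I"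
    unfolding sum_distrib_right by (rule sum.cong) (auto simp: equil_profile_def)
  also have "(\<Sum>i<n. equil_ratio \<delta> I i) * equil_S0 \<delta> I + equil_profile \<delta> I n
      = equil_mass \<delta> I * equil_S0 \<delta> I + \<mu>/outflow_n I"
    unfolding equil_profile_n equil_mass_def using outflow by (simp add: field_simps)
  also have "\<dots> = S0_base I + \<mu>/outflow_n I" unfolding equil_S0_def using mass by simp
  finally show ?thesis unfolding S0_base_def by simp
qed

lemma Sdot_equil_profile_middle:
  assumes d: "0 \<le> \<delta>" and I: "0 \<le> I" and i: "1 \<le> i" "i < n"
  shows "Sdot n \<delta> \<omega> r \<mu> p \<beta> (equil_profile \<delta> I) I i = 0"
proof -
  obtain j where j: "i = Suc j" using i by (cases i) auto
  have "i - 1 < n" using i by simp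
  define den where "den = p i*\<omega> + (1 - p i)*\<delta> + \<mu> + \<beta> i*I"
  have "\<mu> \<le> den" unfolding den_def by (rule class_outflow_ge) (use i d I in auto)
  then have "den \<noteq> 0" using \<mu>_pos by linarith
  then have ratio: "equil_ratio \<delta> I i * den = equil_ratio \<delta> I (i-1) * ((1 - p (i-1))*\<delta>)"
    unfolding j den_def by simp
  have "Sdot n \<delta> \<omega> r \<mu> p \<beta> (equil_profile \<delta> I) I i
      = ((1 - p (i-1))*\<delta>) * equil_ratio \<delta> I (i-1) * equil_S0 \<delta> I - (equil_ratio \<delta> I i * den) * equil_S0 \<delta> I"
    unfolding Sdot_def equil_profile_def den_def using i \<open>i - 1 < n\<close>
    by (simp add: algebra_simps del: equil_ratio.simps)
  then show ?thesis unfolding ratio by simp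
qed

lemma Sdot_equil_profile_last:
  assumes I: "0 \<le> I" "I \<le> 1"
  shows "Sdot n \<delta> \<omega> r \<mu> p \<beta> (equil_profile \<delta> I) I n = 0"
proof -
  have "outflow_n I \<noteq> 0" using outflow_n_bounds[OF I] \<mu>_pos by auto
  then have "equil_profile \<delta> I n * outflow_n I = \<mu> + (1 - p (n-1))*\<delta>*equil_ratio \<delta> I (n-1) * equil_S0 \<delta> I"
    unfolding equil_profile_n by simp
  moreover have "equil_profile \<delta> I (n-1) = equil_ratio \<delta> I (n-1) * equil_S0 \<delta> I"
    using n_pos by (simp add: equil_profile_def)
  moreover have "Sdot n \<delta> \<omega> r \<mu> p \<beta> (equil_profile \<delta> I) I n
      = \<mu> - equil_profile \<delta> I n * outflow_n I + ((1 - p (n - 1)) * \<delta>) * equil_profile \<delta> I (n - 1)"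
    unfolding Sdot_def outflow_n_def using n_pos by (simp add: algebra_simps)
  ultimately show ?thesis by (simp add: algebra_simps)
qed

lemma equil_profile_endemic:
  assumes d: "0 \<le> \<delta>" "\<delta> \<le> \<mu>/2" and I: "0 < I" "I \<le> 1" and root: "equil_residual \<delta> I = 0"
  shows "endemic_eq n \<delta> \<omega> r \<mu> p \<beta> (equil_profile \<delta> I) I"
proof -
  let ?S = "equil_profile \<delta> I"
  have I': "0 \<le> I" "I \<le> 1" using I by auto
  have Idot: "Idot n r \<mu> \<beta> ?S I = 0"
    using root unfolding Idot_def equil_residual_def by (simp add: algebra_simps)
  have middle: "(\<Sum>i\<in>{1..<n}. Sdot n \<delta> \<omega> r \<mu> p \<beta> ?S I i) = 0"
    using Sdot_equil_profile_middle[OF d(1) I'(1)] by (intro sum.neutral) auto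
  \<comment> \<open>the equation for S_0 follows from the others through the total population balance\<close>
  have "(\<Sum>i=0..n. Sdot n \<delta> \<omega> r \<mu> p \<beta> ?S I i) = 0"
    using total_population_deriv[where n=n and p=p and \<delta>=\<delta> and \<omega>=\<omega> and r=r and \<mu>=\<mu> and \<beta>=\<beta>
        and S="?S" and I=I, OF n_pos p_0] equil_profile_sum[OF d I'] Idot
    by simp
  then have "Sdot n \<delta> \<omega> r \<mu> p \<beta> ?S I 0 = 0"
    unfolding sum_first_middle_last[OF n_pos] middle Sdot_equil_profile_last[OF I'] by simp
  then have "\<forall>i\<le>n. Sdot n \<delta> \<omega> r \<mu> p \<beta> ?S I i = 0"
    using Sdot_equil_profile_middle[OF d(1) I'(1)] Sdot_equil_profile_last[OF I']
    by (metis le_neq_implies_less less_one not_less)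
  then show ?thesis
    unfolding endemic_eq_def is_equilibrium_def using Idot equil_profile_sum[OF d I'] I by simp
qed

lemma equil_residual_root:
  assumes d: "0 \<le> \<delta>" "\<delta> \<le> \<mu>/2" and small: "3*real n*\<beta> n*\<delta>/\<mu> < min (equil_residual 0 0) r"
  shows "\<exists>I. 0 < I \<and> I < 1 \<and> equil_residual \<delta> I = 0"
proof -
  have "equil_residual \<delta> 0 > 0"
    using equil_residual_close[OF d, of 0] small by linarith
  moreover have "equil_residual \<delta> 1 < 0"
    using equil_residual_close[OF d, of 1] small equil_residual_zero_delta_at_1 by linarith
  moreover obtain x where "0 \<le> x" "x \<le> 1" "equil_residual \<delta> x = 0"
    using IVT2'[of "equil_residual \<delta>" 1 0 0, OF _ _ _ continuous_on_equil_residual[OF d]] calculation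
    by auto
  ultimately have "0 < x \<and> x < 1 \<and> equil_residual \<delta> x = 0"
    by (metis less_eq_real_def less_irrefl)
  then show ?thesis by blast
qed

section \<open>A Lyapunov function\<close>

definition \<sigma>_min :: real where "\<sigma>_min = \<beta> n * Sn_min"
definition k_min :: real where "k_min = (\<beta> n - \<beta> 0) / (2 * \<beta> n)"
definition k_max :: real where "k_max = (\<beta> n - \<beta> 0) / \<sigma>_min"
definition rate_max :: real where "rate_max = p n * \<omega> + \<mu> + 4 * \<beta> n"

text \<open>The weight of the cross term u_n w is small enough to be absorbed by the u_n^2 and w^2
  terms; the weight of the remaining squares is large enough to absorb the Young remainders
  (weights young_w and young_u) of all cross terms; the admissible \<delta> is then chosen so that
  the transfer terms, which are O(\<delta>), are absorbed as well.\<close>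

definition lyap_eps :: real where
  "lyap_eps = min (min (k_min/2) (1/2)) (k_min*\<mu>*\<sigma>_min / (8*(rate_max\<^sup>2 + \<beta> n*\<sigma>_min)))"
definition young_w :: real where "young_w = lyap_eps*\<sigma>_min/8"
definition young_u :: real where "young_u = k_min*\<mu>/8"
definition lyap_B :: real where
  "lyap_B = 2*real n*((\<beta> n)\<^sup>2/(4*young_w) + (2*lyap_eps*\<beta> n)\<^sup>2/(4*young_u))/\<mu> + 1"
definition lyap_rate :: real where
  "lyap_rate = min (min (k_min*\<mu>/2) (lyap_eps*\<sigma>_min/2)) (lyap_B*\<mu>/2)"
definition transfer_coeff :: real where
  "transfer_coeff = k_max + lyap_eps + lyap_B + lyap_B*\<beta> n*real n/\<mu>"
definition \<delta>_lyap :: real where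
  "\<delta>_lyap = lyap_rate / (10*real n*transfer_coeff)"

lemma lyap_consts_pos:
  "Sn_min > 0" "\<sigma>_min > 0" "k_min > 0" "k_max > 0" "rate_max > 0" "lyap_eps > 0"
  "young_w > 0" "young_u > 0" "lyap_B \<ge> 1" "lyap_rate > 0" "transfer_coeff > 0" "\<delta>_lyap > 0"
proof -
  have pw: "p n * \<omega> \<ge> 0" using p_bounds[of n] \<omega>_nonneg by simp
  show Sn: "Sn_min > 0" unfolding Sn_min_def using \<mu>_pos \<beta>_n_pos pw by simp
  show \<sigma>: "\<sigma>_min > 0" unfolding \<sigma>_min_def using Sn \<beta>_n_pos by simp
  show k: "k_min > 0" unfolding k_min_def using \<beta>_0_less \<beta>_n_pos by simp
  show "k_max > 0" unfolding k_max_def using \<beta>_0_less \<sigma> by simp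
  show c: "rate_max > 0" unfolding rate_max_def using pw \<mu>_pos \<beta>_n_pos by simp
  show e: "lyap_eps > 0" unfolding lyap_eps_def using k \<mu>_pos \<sigma> c \<beta>_n_pos by (simp add: add_pos_pos)
  show yw: "young_w > 0" unfolding young_w_def using e \<sigma> by simp
  show yu: "young_u > 0" unfolding young_u_def using k \<mu>_pos by simp
  have "0 \<le> 2*real n*((\<beta> n)\<^sup>2/(4*young_w) + (2*lyap_eps*\<beta> n)\<^sup>2/(4*young_u))/\<mu>"
    using yw yu \<mu>_pos by simp
  then show B: "lyap_B \<ge> 1" unfolding lyap_B_def by linarith
  show r: "lyap_rate > 0" unfolding lyap_rate_def using k \<mu>_pos e \<sigma> B by simp
  have "0 \<le> lyap_B*\<beta> n*real n/\<mu>" using B \<beta>_n_pos \<mu>_pos by simp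
  then show K: "transfer_coeff > 0"
    unfolding transfer_coeff_def using \<open>k_max > 0\<close> e B by linarith
  show "\<delta>_lyap > 0" unfolding \<delta>_lyap_def using r K n_pos by simp
qed

lemma lyap_eps_le: "lyap_eps \<le> k_min/2" "lyap_eps \<le> 1/2"
proof -
  have "lyap_eps \<le> min (k_min/2) (1/2)" unfolding lyap_eps_def by (rule min.cobounded1)
  then show "lyap_eps \<le> k_min/2" "lyap_eps \<le> 1/2" by auto
qed

lemma lyap_eps_rate_bound:
  "(lyap_eps*rate_max)\<^sup>2/(4*young_w) + 2*lyap_eps*\<beta> n \<le> k_min*\<mu>/4"
proof -
  note pos = lyap_consts_pos
  have den: "8*(rate_max\<^sup>2 + \<beta> n*\<sigma>_min) > 0" using pos \<beta>_n_pos by (simp add: add_pos_pos)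
  have "lyap_eps \<le> k_min*\<mu>*\<sigma>_min / (8*(rate_max\<^sup>2 + \<beta> n*\<sigma>_min))"
    unfolding lyap_eps_def by simp
  then have "lyap_eps * (8*(rate_max\<^sup>2 + \<beta> n*\<sigma>_min)) \<le> k_min*\<mu>*\<sigma>_min"
    using den by (simp add: le_divide_eq)
  moreover have "(lyap_eps*rate_max)\<^sup>2/(4*young_w) + 2*lyap_eps*\<beta> n
      = lyap_eps * (8*(rate_max\<^sup>2 + \<beta> n*\<sigma>_min)) / (4*\<sigma>_min)"
    unfolding young_w_def using pos by (simp add: field_simps power2_eq_square)
  ultimately show ?thesis using pos by (simp add: divide_le_eq)
qed

lemma lyap_B_eq:
  "(lyap_B - 1)*\<mu>/2 = real n*((\<beta> n)\<^sup>2/(4*young_w) + (2*lyap_eps*\<beta> n)\<^sup>2/(4*young_u))"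
  unfolding lyap_B_def using \<mu>_pos by simp

text \<open>S_i' in terms of u = S - S* and w = I - I*, for 1 \<le> i \<le> n.\<close>

definition Sdev :: "real \<Rightarrow> (nat \<Rightarrow> real) \<Rightarrow> (nat \<Rightarrow> real) \<Rightarrow> real \<Rightarrow> real \<Rightarrow> nat \<Rightarrow> real" where
  "Sdev \<delta> Se u w I i = (if i < n then -(p i*\<omega> + (1 - p i)*\<delta> + \<mu>)*u i else -(p n*\<omega> + \<mu>)*u i)
      + (1 - p (i - 1))*\<delta>*u (i - 1) - \<beta> i*(I*u i + Se i*w)"

definition force_dev :: "(nat \<Rightarrow> real) \<Rightarrow> real" where
  "force_dev u = (\<Sum>i=0..n. \<beta> i * u i)"

definition mid_force_dev :: "(nat \<Rightarrow> real) \<Rightarrow> real" where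
  "mid_force_dev u = (\<Sum>i\<in>{1..<n}. (\<beta> i - \<beta> 0)*u i)"

definition mid_sq :: "(nat \<Rightarrow> real) \<Rightarrow> real" where
  "mid_sq u = (\<Sum>i\<in>{1..<n}. (u i)\<^sup>2)"

definition lyap_norm :: "(nat \<Rightarrow> real) \<Rightarrow> real \<Rightarrow> real \<Rightarrow> real" where
  "lyap_norm u w z = (u n)\<^sup>2 + w\<^sup>2 + z\<^sup>2 + mid_sq u"

text \<open>The arguments u, w, z of lyap stand for S - S*, I - I* and \<Sum>u + w. The weight Iw of w^2
  is I* in the stability proof, but the I of a second equilibrium in the uniqueness proof.\<close>

definition lyap_k :: "(nat \<Rightarrow> real) \<Rightarrow> real" where
  "lyap_k Se = (\<beta> n - \<beta> 0)/(\<beta> n * Se n)"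

definition lyap :: "real \<Rightarrow> (nat \<Rightarrow> real) \<Rightarrow> (nat \<Rightarrow> real) \<Rightarrow> real \<Rightarrow> real \<Rightarrow> real" where
  "lyap Iw Se u w z =
     lyap_k Se/2*(u n)\<^sup>2 + w\<^sup>2/(2*Iw) + lyap_eps*(u n*w) + lyap_B/2*(mid_sq u + z\<^sup>2)"

definition lyap_deriv ::
    "real \<Rightarrow> real \<Rightarrow> (nat \<Rightarrow> real) \<Rightarrow> (nat \<Rightarrow> real) \<Rightarrow> real \<Rightarrow> real \<Rightarrow> real \<Rightarrow> real" where
  "lyap_deriv \<delta> Iw Se u w z I =
     lyap_k Se * u n * Sdev \<delta> Se u w I n + w/Iw*(I*force_dev u)
     + lyap_eps*(Sdev \<delta> Se u w I n * w + u n*(I*force_dev u))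
     + lyap_B*(\<Sum>i\<in>{1..<n}. u i * Sdev \<delta> Se u w I i) - lyap_B*\<mu>*z\<^sup>2"

lemma mid_sq_nonneg: "mid_sq u \<ge> 0"
  unfolding mid_sq_def by (intro sum_nonneg) simp

lemma lyap_norm_nonneg: "lyap_norm u w z \<ge> 0"
  unfolding lyap_norm_def using mid_sq_nonneg[of u] by simp

lemma force_dev_decomp:
  assumes z: "z = (\<Sum>i=0..n. u i) + w"
  shows "force_dev u = \<beta> 0*z - \<beta> 0*w + (\<beta> n - \<beta> 0)*u n + mid_force_dev u"
proof -
  have "z = u 0 + (\<Sum>i\<in>{1..<n}. u i) + u n + w"
    using z sum_first_middle_last[OF n_pos, of u] by simp
  moreover have "mid_force_dev u = (\<Sum>i\<in>{1..<n}. \<beta> i * u i) - \<beta> 0 * (\<Sum>i\<in>{1..<n}. u i)"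
    unfolding mid_force_dev_def by (simp add: algebra_simps sum_subtractf sum_distrib_left)
  ultimately show ?thesis
    unfolding force_dev_def sum_first_middle_last[OF n_pos] by (simp add: algebra_simps)
qed

lemma sum_sq_le_lyap_norm:
  assumes z: "z = (\<Sum>i=0..n. u i) + w"
  shows "(\<Sum>i=0..n. (u i)\<^sup>2) + w\<^sup>2 \<le> 5 * real n * lyap_norm u w z"
proof -
  let ?m = "\<Sum>i\<in>{1..<n}. u i"
  have "?m\<^sup>2 \<le> mid_sq u * real (card {1..<n})"
    unfolding mid_sq_def by (rule sum_squared_le_sum_of_squares)
  also have "\<dots> \<le> real n * mid_sq u"
    using mid_sq_nonneg[of u] mult_left_mono[of "real (card {1..<n})" "real n" "mid_sq u"]
    by (simp add: mult.commute)
  finally have m: "?m\<^sup>2 \<le> real n * mid_sq u" .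
  have "u 0 = z - w - u n - ?m" using z sum_first_middle_last[OF n_pos, of u] by simp
  then have u0: "(u 0)\<^sup>2 \<le> 4 * (z\<^sup>2 + w\<^sup>2 + (u n)\<^sup>2 + ?m\<^sup>2)" using power2_diff3_le by metis
  have "real n \<ge> 1" using n_pos by simp
  then have "1 * mid_sq u \<le> real n * mid_sq u"
    "1 * (z\<^sup>2 + w\<^sup>2 + (u n)\<^sup>2) \<le> real n * (z\<^sup>2 + w\<^sup>2 + (u n)\<^sup>2)"
    using mid_sq_nonneg[of u] by (intro mult_right_mono; simp)+
  moreover have "(\<Sum>i=0..n. (u i)\<^sup>2) = (u 0)\<^sup>2 + mid_sq u + (u n)\<^sup>2"
    unfolding mid_sq_def by (rule sum_first_middle_last[OF n_pos])
  ultimately have "(\<Sum>i=0..n. (u i)\<^sup>2) + w\<^sup>2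
      \<le> 5 * (real n * mid_sq u) + 5 * (real n * (z\<^sup>2 + w\<^sup>2 + (u n)\<^sup>2))"
    using u0 m zero_le_power2[of z] by (smt (verit))
  then show ?thesis unfolding lyap_norm_def by (simp add: algebra_simps)
qed

lemma sq_le_sum_sq:
  fixes u :: "nat \<Rightarrow> real"
  shows "j \<le> n \<Longrightarrow> (u j)\<^sup>2 \<le> (\<Sum>i=0..n. (u i)\<^sup>2)"
  using member_le_sum[of j "{0..n}" "\<lambda>i. (u i)\<^sup>2"] by auto

lemma two_sq_le_sum_sq:
  fixes u :: "nat \<Rightarrow> real"
  assumes "i \<le> n" "j \<le> n" "i \<noteq> j"
  shows "(u i)\<^sup>2 + (u j)\<^sup>2 \<le> (\<Sum>k=0..n. (u k)\<^sup>2)"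
proof -
  have "(\<Sum>k\<in>{i, j}. (u k)\<^sup>2) \<le> (\<Sum>k=0..n. (u k)\<^sup>2)"
    using assms by (intro sum_mono2) auto
  then show ?thesis using assms by simp
qed

lemma mid_sq_le_sum_sq:
  fixes u :: "nat \<Rightarrow> real"
  shows "mid_sq u \<le> (\<Sum>i=0..n. (u i)\<^sup>2)"
  unfolding mid_sq_def by (rule sum_mono2) auto

lemma mid_sq_shift_le_sum_sq:
  fixes u :: "nat \<Rightarrow> real"
  shows "(\<Sum>i\<in>{1..<n}. (u (i - 1))\<^sup>2) \<le> (\<Sum>i=0..n. (u i)\<^sup>2)"
proof -
  obtain m where m: "n = Suc m" using n_pos by (cases n) auto
  have "(\<Sum>i\<in>{1..<n}. (u (i - 1))\<^sup>2) = (\<Sum>j\<in>{0..<m}. (u j)\<^sup>2)"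
    unfolding m One_nat_def sum.shift_bounds_Suc_ivl by simp
  also have "\<dots> \<le> (\<Sum>i=0..n. (u i)\<^sup>2)" by (rule sum_mono2) (auto simp: m)
  finally show ?thesis .
qed

definition lyap_deriv_main :: "real \<Rightarrow> (nat \<Rightarrow> real) \<Rightarrow> (nat \<Rightarrow> real) \<Rightarrow> real \<Rightarrow> real \<Rightarrow> real \<Rightarrow> real" where
  "lyap_deriv_main \<delta> Se u w z I =
     (lyap_eps*I*(\<beta> n - \<beta> 0) - lyap_k Se * outflow_n I)*(u n)\<^sup>2
     - (\<beta> 0 + lyap_eps*(\<beta> n*Se n))*w\<^sup>2
     - lyap_B*(\<Sum>i\<in>{1..<n}. (p i*\<omega> + (1 - p i)*\<delta> + \<mu> + \<beta> i*I)*(u i)\<^sup>2) - lyap_B*\<mu>*z\<^sup>2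
     + (\<beta> 0*w*z + w*mid_force_dev u - lyap_eps*(outflow_n I + I*\<beta> 0)*w*u n)
     + (lyap_eps*I*\<beta> 0*u n*z + lyap_eps*I*u n*mid_force_dev u)"

definition lyap_deriv_transfer :: "real \<Rightarrow> (nat \<Rightarrow> real) \<Rightarrow> (nat \<Rightarrow> real) \<Rightarrow> real \<Rightarrow> real" where
  "lyap_deriv_transfer \<delta> Se u w =
     (lyap_k Se*u n + lyap_eps*w)*((1 - p (n-1))*\<delta>*u (n-1))
     + lyap_B*(\<Sum>i\<in>{1..<n}. (1 - p (i-1))*\<delta>*u i*u (i-1)) - lyap_B*(\<Sum>i\<in>{1..<n}. \<beta> i*Se i*u i*w)"

lemma lyap_deriv_split:
  assumes z: "z = (\<Sum>i=0..n. u i) + w" and Sn: "Se n \<noteq> 0"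
  shows "lyap_deriv \<delta> Iw Se u w z I = lyap_deriv_main \<delta> Se u w z I + lyap_deriv_transfer \<delta> Se u w
           + (w/Iw*(I*force_dev u) - w*force_dev u)"
proof -
  have k: "lyap_k Se * (\<beta> n * Se n) = \<beta> n - \<beta> 0"
    using Sn \<beta>_n_pos by (simp add: lyap_k_def)
  have Sdev_n: "Sdev \<delta> Se u w I n = -outflow_n I*u n + (1 - p (n-1))*\<delta>*u (n-1) - \<beta> n*Se n*w"
    unfolding Sdev_def outflow_n_def by (simp add: algebra_simps)
  have Sdev_mid: "(\<Sum>i\<in>{1..<n}. u i * Sdev \<delta> Se u w I i)
      = (\<Sum>i\<in>{1..<n}. (1 - p (i-1))*\<delta>*u i*u (i-1)) - (\<Sum>i\<in>{1..<n}. \<beta> i*Se i*u i*w)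
        - (\<Sum>i\<in>{1..<n}. (p i*\<omega> + (1 - p i)*\<delta> + \<mu> + \<beta> i*I)*(u i)\<^sup>2)"
    unfolding sum_subtractf[symmetric]
    by (rule sum.cong) (auto simp: Sdev_def power2_eq_square algebra_simps)
  have "lyap_deriv \<delta> Iw Se u w z I = lyap_deriv_main \<delta> Se u w z I + lyap_deriv_transfer \<delta> Se u w
           + (w/Iw*(I*force_dev u) - w*force_dev u)
           + (\<beta> n - \<beta> 0 - lyap_k Se * (\<beta> n * Se n)) * (u n * w)"
    unfolding lyap_deriv_def lyap_deriv_main_def lyap_deriv_transfer_def Sdev_n Sdev_mid
      force_dev_decomp[OF z]
    by (simp add: power2_eq_square algebra_simps)
  then show ?thesis using k by simp
qed

lemma lyap_k_bounds:
  assumes "Sn_min \<le> Se n" "Se n \<le> 2"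
  shows "k_min \<le> lyap_k Se" "lyap_k Se \<le> k_max"
proof -
  have pos: "\<beta> n * Se n > 0" using assms lyap_consts_pos \<beta>_n_pos by (simp add: mult_pos_pos)
  have "\<beta> n * Se n \<le> 2 * \<beta> n" using assms \<beta>_n_pos by simp
  then show "k_min \<le> lyap_k Se"
    unfolding lyap_k_def k_min_def using \<beta>_0_less pos by (intro divide_left_mono) auto
  have "\<sigma>_min \<le> \<beta> n * Se n" unfolding \<sigma>_min_def using assms \<beta>_n_pos by simp
  then show "lyap_k Se \<le> k_max"
    unfolding lyap_k_def k_max_def using \<beta>_0_less lyap_consts_pos by (intro divide_left_mono) auto
qed

lemma mid_coeff_bound: "i \<in> {1..<n} \<Longrightarrow> \<bar>\<beta> i - \<beta> 0\<bar> \<le> \<beta> n"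
  using \<beta>_bounds[of i] \<beta>_0_nonneg by auto

lemma lyap_cross_w_le:
  assumes I: "0 \<le> I" "I \<le> 2"
  shows "\<beta> 0*w*z + w*mid_force_dev u - lyap_eps*(outflow_n I + I*\<beta> 0)*w*u n
     \<le> 3*young_w*w\<^sup>2 + (lyap_eps*rate_max)\<^sup>2/(4*young_w)*(u n)\<^sup>2
       + (\<beta> n)\<^sup>2/(4*young_w)*z\<^sup>2 + real n*(\<beta> n)\<^sup>2/(4*young_w)*mid_sq u"
proof -
  note pos = lyap_consts_pos
  have "\<beta> 0*w*z \<le> young_w*w\<^sup>2 + (\<beta> n)\<^sup>2/(4*young_w)*z\<^sup>2"
    using \<beta>_0_nonneg \<beta>_0_less pos by (intro mult_le_weighted_squares) auto
  moreover have "w*mid_force_dev u \<le> young_w*w\<^sup>2 + real n*(\<beta> n)\<^sup>2/(4*young_w)*mid_sq u"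
  proof -
    have "w*mid_force_dev u = (\<Sum>i\<in>{1..<n}. (\<beta> i - \<beta> 0)*w*u i)"
      unfolding mid_force_dev_def sum_distrib_left by (rule sum.cong) auto
    also have "\<dots> \<le> real n*(young_w/real n)*w\<^sup>2 + (\<beta> n)\<^sup>2/(4*(young_w/real n))*mid_sq u"
      unfolding mid_sq_def using pos n_pos mid_coeff_bound
      by (intro sum_mult_le_weighted_squares) auto
    finally show ?thesis using n_pos by (simp add: mult.commute mult.left_commute)
  qed
  moreover have "- (lyap_eps*(outflow_n I + I*\<beta> 0))*w*u n
      \<le> young_w*w\<^sup>2 + (lyap_eps*rate_max)\<^sup>2/(4*young_w)*(u n)\<^sup>2"
  proof (intro mult_le_weighted_squares)
    have "\<mu> \<le> outflow_n I" "0 \<le> I*\<beta> 0" using outflow_n_bounds[of 0] I \<beta>_0_nonneg \<beta>_n_pos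
      by (auto simp: outflow_n_def p_bounds \<omega>_nonneg)
    moreover have "\<beta> n*I \<le> 2*\<beta> n" "I*\<beta> 0 \<le> 2*\<beta> n"
      using I \<beta>_n_pos \<beta>_0_nonneg \<beta>_0_less by (auto intro: mult_mono)
    ultimately have "0 \<le> outflow_n I + I*\<beta> 0" "outflow_n I + I*\<beta> 0 \<le> rate_max"
      unfolding outflow_n_def rate_max_def using \<mu>_pos by linarith+
    then show "\<bar>- (lyap_eps*(outflow_n I + I*\<beta> 0))\<bar> \<le> lyap_eps*rate_max"
      using pos by (simp add: abs_mult)
  qed (use pos in simp)
  ultimately show ?thesis by (simp add: algebra_simps)
qed

lemma lyap_cross_u_le:
  assumes I: "0 \<le> I" "I \<le> 2"
  shows "lyap_eps*I*\<beta> 0*u n*z + lyap_eps*I*u n*mid_force_dev u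
     \<le> 2*young_u*(u n)\<^sup>2 + (2*lyap_eps*\<beta> n)\<^sup>2/(4*young_u)*z\<^sup>2
       + real n*(2*lyap_eps*\<beta> n)\<^sup>2/(4*young_u)*mid_sq u"
proof -
  note pos = lyap_consts_pos
  have coeff: "\<bar>lyap_eps*I*c\<bar> \<le> 2*lyap_eps*\<beta> n" if "\<bar>c\<bar> \<le> \<beta> n" for c
  proof -
    have "I*\<bar>c\<bar> \<le> 2*\<beta> n" using that I \<beta>_n_pos mult_mono[of I 2 "\<bar>c\<bar>" "\<beta> n"] by auto
    then show ?thesis using pos I by (simp add: abs_mult mult.assoc)
  qed
  have "lyap_eps*I*\<beta> 0*u n*z \<le> young_u*(u n)\<^sup>2 + (2*lyap_eps*\<beta> n)\<^sup>2/(4*young_u)*z\<^sup>2"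
    using coeff[of "\<beta> 0"] \<beta>_0_nonneg \<beta>_0_less pos by (intro mult_le_weighted_squares) auto
  moreover have "lyap_eps*I*u n*mid_force_dev u
      \<le> young_u*(u n)\<^sup>2 + real n*(2*lyap_eps*\<beta> n)\<^sup>2/(4*young_u)*mid_sq u"
  proof -
    have "lyap_eps*I*u n*mid_force_dev u = (\<Sum>i\<in>{1..<n}. (lyap_eps*I*(\<beta> i - \<beta> 0))*u n*u i)"
      unfolding mid_force_dev_def sum_distrib_left by (rule sum.cong) auto
    also have "\<dots> \<le> real n*(young_u/real n)*(u n)\<^sup>2
        + (2*lyap_eps*\<beta> n)\<^sup>2/(4*(young_u/real n))*mid_sq u"
      unfolding mid_sq_def using pos n_pos coeff mid_coeff_bound
      by (intro sum_mult_le_weighted_squares) auto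
    finally show ?thesis using n_pos by (simp add: mult.commute mult.left_commute)
  qed
  ultimately show ?thesis by simp
qed

lemma lyap_coeff_bounds:
  "2*lyap_eps*\<beta> n - k_min*\<mu> + (lyap_eps*rate_max)\<^sup>2/(4*young_w) + 2*young_u \<le> - (k_min*\<mu>/2)"
  "4*young_w - lyap_eps*\<sigma>_min \<le> - (lyap_eps*\<sigma>_min/2)"
  "(\<beta> n)\<^sup>2/(4*young_w) + (2*lyap_eps*\<beta> n)\<^sup>2/(4*young_u) - lyap_B*\<mu> \<le> - (lyap_B*\<mu>/2)"
  "real n*(\<beta> n)\<^sup>2/(4*young_w) + real n*(2*lyap_eps*\<beta> n)\<^sup>2/(4*young_u) - lyap_B*\<mu>
     \<le> - (lyap_B*\<mu>/2)"
proof -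
  note pos = lyap_consts_pos
  show "2*lyap_eps*\<beta> n - k_min*\<mu> + (lyap_eps*rate_max)\<^sup>2/(4*young_w) + 2*young_u \<le> - (k_min*\<mu>/2)"
    using lyap_eps_rate_bound unfolding young_u_def by linarith
  show "4*young_w - lyap_eps*\<sigma>_min \<le> - (lyap_eps*\<sigma>_min/2)"
    unfolding young_w_def by simp
  define c where "c = (\<beta> n)\<^sup>2/(4*young_w) + (2*lyap_eps*\<beta> n)\<^sup>2/(4*young_u)"
  have "c \<le> real n * c" "real n * c = (lyap_B - 1)*\<mu>/2"
    using n_pos pos mult_right_mono[of 1 "real n" c] unfolding lyap_B_eq c_def by auto
  then have "c - lyap_B*\<mu> \<le> - (lyap_B*\<mu>/2)" "real n * c - lyap_B*\<mu> \<le> - (lyap_B*\<mu>/2)"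
    using \<mu>_pos by (auto simp: left_diff_distrib)
  then show "(\<beta> n)\<^sup>2/(4*young_w) + (2*lyap_eps*\<beta> n)\<^sup>2/(4*young_u) - lyap_B*\<mu> \<le> - (lyap_B*\<mu>/2)"
    "real n*(\<beta> n)\<^sup>2/(4*young_w) + real n*(2*lyap_eps*\<beta> n)\<^sup>2/(4*young_u) - lyap_B*\<mu>
       \<le> - (lyap_B*\<mu>/2)"
    unfolding c_def by (simp_all add: algebra_simps)
qed

lemma lyap_main_diag_le:
  assumes d: "0 \<le> \<delta>" and I: "0 \<le> I" "I \<le> 2" and Sn: "Sn_min \<le> Se n" "Se n \<le> 2"
  shows "(lyap_eps*I*(\<beta> n - \<beta> 0) - lyap_k Se * outflow_n I)*(u n)\<^sup>2
      \<le> (2*lyap_eps*\<beta> n - k_min*\<mu>)*(u n)\<^sup>2"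
    and "lyap_eps*\<sigma>_min*w\<^sup>2 \<le> (\<beta> 0 + lyap_eps*(\<beta> n*Se n))*w\<^sup>2"
    and "lyap_B*(\<mu>*mid_sq u) \<le> lyap_B*(\<Sum>i\<in>{1..<n}. (p i*\<omega> + (1 - p i)*\<delta> + \<mu> + \<beta> i*I)*(u i)\<^sup>2)"
proof -
  note pos = lyap_consts_pos
  have "k_min*\<mu> \<le> lyap_k Se * outflow_n I"
    using lyap_k_bounds[of Se, OF Sn] outflow_n_bounds[of 0] I pos \<mu>_pos \<beta>_n_pos
    by (intro mult_mono) (auto simp: outflow_n_def p_bounds \<omega>_nonneg)
  moreover have "I*(\<beta> n - \<beta> 0) \<le> 2*(\<beta> n - \<beta> 0)" using I \<beta>_0_less by (intro mult_right_mono) auto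
  then have "I*(\<beta> n - \<beta> 0) \<le> 2*\<beta> n" using \<beta>_0_nonneg by argo
  then have "lyap_eps*I*(\<beta> n - \<beta> 0) \<le> 2*lyap_eps*\<beta> n"
    using pos mult_left_mono[of "I*(\<beta> n - \<beta> 0)" "2*\<beta> n" lyap_eps] by (simp add: mult.assoc)
  ultimately show "(lyap_eps*I*(\<beta> n - \<beta> 0) - lyap_k Se * outflow_n I)*(u n)\<^sup>2
      \<le> (2*lyap_eps*\<beta> n - k_min*\<mu>)*(u n)\<^sup>2"
    by (intro mult_right_mono) auto
  have "lyap_eps*\<sigma>_min \<le> lyap_eps*(\<beta> n*Se n)"
    unfolding \<sigma>_min_def using Sn \<beta>_n_pos pos by (intro mult_left_mono) auto
  then show "lyap_eps*\<sigma>_min*w\<^sup>2 \<le> (\<beta> 0 + lyap_eps*(\<beta> n*Se n))*w\<^sup>2"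
    using \<beta>_0_nonneg by (intro mult_right_mono) auto
  have "\<mu>*mid_sq u \<le> (\<Sum>i\<in>{1..<n}. (p i*\<omega> + (1 - p i)*\<delta> + \<mu> + \<beta> i*I)*(u i)\<^sup>2)"
    unfolding mid_sq_def sum_distrib_left
    using class_outflow_ge[OF _ d I(1)] by (intro sum_mono mult_right_mono) auto
  then show "lyap_B*(\<mu>*mid_sq u) \<le> lyap_B*(\<Sum>i\<in>{1..<n}. (p i*\<omega> + (1 - p i)*\<delta> + \<mu> + \<beta> i*I)*(u i)\<^sup>2)"
    using pos by (intro mult_left_mono) auto
qed

lemma lyap_deriv_main_le:
  assumes d: "0 \<le> \<delta>" and I: "0 \<le> I" "I \<le> 2" and Sn: "Sn_min \<le> Se n" "Se n \<le> 2"
  shows "lyap_deriv_main \<delta> Se u w z I + young_w*w\<^sup>2 \<le> - lyap_rate * lyap_norm u w z"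
proof -
  define X W Z U where "X = (u n)\<^sup>2" and "W = w\<^sup>2" and "Z = z\<^sup>2" and "U = mid_sq u"
  have nonneg: "0 \<le> X" "0 \<le> W" "0 \<le> Z" "0 \<le> U"
    unfolding X_def W_def Z_def U_def using mid_sq_nonneg by auto
  note coeff = lyap_coeff_bounds(1)[THEN mult_right_mono, OF nonneg(1)]
    lyap_coeff_bounds(2)[THEN mult_right_mono, OF nonneg(2)]
    lyap_coeff_bounds(3)[THEN mult_right_mono, OF nonneg(3)]
    lyap_coeff_bounds(4)[THEN mult_right_mono, OF nonneg(4)]
  have "lyap_deriv_main \<delta> Se u w z I + young_w*W
      \<le> - (k_min*\<mu>/2*X) - (lyap_eps*\<sigma>_min/2*W) - (lyap_B*\<mu>/2*Z) - (lyap_B*\<mu>/2*U)"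
    using lyap_main_diag_le(1)[where Se=Se and u=u, OF d I Sn]
      lyap_main_diag_le(2)[where Se=Se and w=w, OF d I Sn] lyap_main_diag_le(3)[where Se=Se and u=u, OF d I Sn] lyap_cross_w_le[OF I, of w z u] lyap_cross_u_le[OF I, of u z]
      coeff
    unfolding lyap_deriv_main_def X_def[symmetric] W_def[symmetric] Z_def[symmetric] U_def[symmetric]
    by (simp add: algebra_simps)
  also have "\<dots> \<le> - lyap_rate * lyap_norm u w z"
  proof -
    have "lyap_rate \<le> k_min*\<mu>/2" "lyap_rate \<le> lyap_eps*\<sigma>_min/2" "lyap_rate \<le> lyap_B*\<mu>/2"
      unfolding lyap_rate_def by auto
    then have "lyap_rate*X \<le> (k_min*\<mu>/2)*X" "lyap_rate*W \<le> (lyap_eps*\<sigma>_min/2)*W"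
      "lyap_rate*Z \<le> (lyap_B*\<mu>/2)*Z" "lyap_rate*U \<le> (lyap_B*\<mu>/2)*U"
      using mult_right_mono nonneg by metis+
    then show ?thesis unfolding lyap_norm_def X_def W_def Z_def U_def by (simp add: algebra_simps)
  qed
  finally show ?thesis unfolding W_def .
qed

lemma inflow_n_term_le:
  fixes u :: "nat \<Rightarrow> real"
  assumes d: "0 \<le> \<delta>" and k: "0 \<le> k" "k \<le> k_max"
  shows "(k*u n + lyap_eps*w)*((1 - p (n-1))*\<delta>*u (n-1))
    \<le> (k_max + lyap_eps)*\<delta>*((\<Sum>i=0..n. (u i)\<^sup>2) + w\<^sup>2)"
proof -
  define P where "P = (\<Sum>i=0..n. (u i)\<^sup>2)"
  have pn1: "0 \<le> 1 - p (n-1)" "1 - p (n-1) \<le> 1" using p_bounds[of "n-1"] by auto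
  have "\<bar>k*(1 - p (n-1))*\<delta>\<bar> \<le> k_max*\<delta>"
    using pn1 d k mult_mono[of k k_max "1 - p (n-1)" 1] by (simp add: abs_mult mult_right_mono)
  then have "k*(1 - p (n-1))*\<delta>*u n*u (n-1) \<le> k_max*\<delta>/2*(u n)\<^sup>2 + k_max*\<delta>/2*(u (n-1))\<^sup>2"
    by (rule mult_le_half_squares)
  also have "\<dots> \<le> k_max*\<delta>/2*P"
    using two_sq_le_sum_sq[of n "n-1" u] n_pos d lyap_consts_pos
    unfolding P_def distrib_left[symmetric] by (intro mult_left_mono) auto
  finally have un: "k*(1 - p (n-1))*\<delta>*u n*u (n-1) \<le> k_max*\<delta>/2*P" .
  have "(1 - p (n-1))*\<delta> \<le> \<delta>" using pn1 d by (simp add: mult_left_le_one_le)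
  then have "\<bar>lyap_eps*(1 - p (n-1))*\<delta>\<bar> \<le> lyap_eps*\<delta>"
    using pn1 d lyap_consts_pos by (simp add: abs_mult mult_left_mono mult.assoc)
  then have "lyap_eps*(1 - p (n-1))*\<delta>*u (n-1)*w \<le> lyap_eps*\<delta>/2*(u (n-1))\<^sup>2 + lyap_eps*\<delta>/2*w\<^sup>2"
    by (rule mult_le_half_squares)
  also have "\<dots> \<le> lyap_eps*\<delta>/2*P + lyap_eps*\<delta>/2*w\<^sup>2"
    using sq_le_sum_sq[of "n-1" u] d lyap_consts_pos unfolding P_def by (simp add: mult_left_mono)
  finally have w: "lyap_eps*(1 - p (n-1))*\<delta>*u (n-1)*w \<le> lyap_eps*\<delta>/2*P + lyap_eps*\<delta>/2*w\<^sup>2" .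
  have nonneg: "0 \<le> k_max*\<delta>*P" "0 \<le> lyap_eps*\<delta>*P" "0 \<le> k_max*\<delta>*w\<^sup>2" "0 \<le> lyap_eps*\<delta>*w\<^sup>2"
    using d lyap_consts_pos unfolding P_def by (auto intro!: mult_nonneg_nonneg sum_nonneg)
  have "(k*u n + lyap_eps*w)*((1 - p (n-1))*\<delta>*u (n-1))
      = k*(1 - p (n-1))*\<delta>*u n*u (n-1) + lyap_eps*(1 - p (n-1))*\<delta>*u (n-1)*w"
    by (simp add: algebra_simps)
  also have "\<dots> \<le> (k_max + lyap_eps)*\<delta>*(P + w\<^sup>2)"
    using un w nonneg by (simp add: algebra_simps)
  finally show ?thesis unfolding P_def .
qed

lemma mid_transfer_le:
  fixes u :: "nat \<Rightarrow> real"
  assumes d: "0 \<le> \<delta>"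
  shows "(\<Sum>i\<in>{1..<n}. (1 - p (i-1))*\<delta>*u i*u (i-1)) \<le> \<delta>*(\<Sum>i=0..n. (u i)\<^sup>2)"
proof -
  have "(\<Sum>i\<in>{1..<n}. (1 - p (i-1))*\<delta>*u i*u (i-1))
      \<le> (\<Sum>i\<in>{1..<n}. \<delta>/2*(u i)\<^sup>2 + \<delta>/2*(u (i-1))\<^sup>2)"
  proof (rule sum_mono)
    fix i assume "i \<in> {1..<n}"
    then have "0 \<le> p (i-1)" "p (i-1) \<le> 1" using p_bounds[of "i-1"] by auto
    then have "\<bar>(1 - p (i-1))*\<delta>\<bar> \<le> \<delta>" using d by (simp add: abs_mult mult_left_le_one_le)
    then show "(1 - p (i-1))*\<delta>*u i*u (i-1) \<le> \<delta>/2*(u i)\<^sup>2 + \<delta>/2*(u (i-1))\<^sup>2"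
      by (rule mult_le_half_squares)
  qed
  also have "\<dots> = \<delta>/2*mid_sq u + \<delta>/2*(\<Sum>i\<in>{1..<n}. (u (i-1))\<^sup>2)"
    unfolding mid_sq_def by (simp add: sum.distrib sum_distrib_left)
  also have "\<dots> \<le> \<delta>/2*(\<Sum>i=0..n. (u i)\<^sup>2) + \<delta>/2*(\<Sum>i=0..n. (u i)\<^sup>2)"
    using mid_sq_le_sum_sq[of u] mid_sq_shift_le_sum_sq[of u] d
    by (intro add_mono mult_left_mono) auto
  finally show ?thesis by simp
qed

lemma mid_infection_dev_le:
  fixes u :: "nat \<Rightarrow> real"
  assumes d: "0 \<le> \<delta>" and Smid: "\<forall>i\<in>{1..<n}. \<bar>Se i\<bar> \<le> \<delta>/\<mu>"
  shows "- (\<Sum>i\<in>{1..<n}. \<beta> i*Se i*u i*w) \<le> \<beta> n*real n/\<mu>*\<delta>*((\<Sum>i=0..n. (u i)\<^sup>2) + w\<^sup>2)"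
proof -
  define C where "C = \<beta> n*\<delta>/\<mu>"
  have C: "0 \<le> C" unfolding C_def using \<beta>_n_pos d \<mu>_pos by simp
  have "- (\<Sum>i\<in>{1..<n}. \<beta> i*Se i*u i*w) = (\<Sum>i\<in>{1..<n}. (- (\<beta> i*Se i))*u i*w)"
    by (simp add: sum_negf[symmetric])
  also have "\<dots> \<le> (\<Sum>i\<in>{1..<n}. C/2*(u i)\<^sup>2 + C/2*w\<^sup>2)"
  proof (rule sum_mono)
    fix i assume i: "i \<in> {1..<n}"
    have "\<bar>\<beta> i\<bar> \<le> \<beta> n" using \<beta>_bounds[of i] \<beta>_0_nonneg i by auto
    then have "\<bar>\<beta> i\<bar>*\<bar>Se i\<bar> \<le> \<beta> n*(\<delta>/\<mu>)" using Smid i by (intro mult_mono) auto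
    then have "\<bar>- (\<beta> i*Se i)\<bar> \<le> C" unfolding C_def by (simp add: abs_mult)
    then show "(- (\<beta> i*Se i))*u i*w \<le> C/2*(u i)\<^sup>2 + C/2*w\<^sup>2" by (rule mult_le_half_squares)
  qed
  also have "\<dots> = C/2*mid_sq u + C/2*(real (n - 1)*w\<^sup>2)"
    unfolding mid_sq_def by (simp add: sum.distrib sum_distrib_left)
  also have "\<dots> \<le> C*real n*((\<Sum>i=0..n. (u i)\<^sup>2) + w\<^sup>2)"
  proof -
    have "mid_sq u \<le> real n*(\<Sum>i=0..n. (u i)\<^sup>2)"
      using mid_sq_le_sum_sq[of u] n_pos sum_nonneg[of "{0..n}" "\<lambda>i. (u i)\<^sup>2"]
        mult_right_mono[of 1 "real n" "\<Sum>i=0..n. (u i)\<^sup>2"] by auto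
    moreover have "real (n - 1)*w\<^sup>2 \<le> real n*w\<^sup>2" by (intro mult_right_mono) auto
    ultimately have "C/2*mid_sq u + C/2*(real (n - 1)*w\<^sup>2)
        \<le> C/2*(real n*(\<Sum>i=0..n. (u i)\<^sup>2)) + C/2*(real n*w\<^sup>2)"
      using C by (intro add_mono mult_left_mono) auto
    also have "\<dots> \<le> C*real n*((\<Sum>i=0..n. (u i)\<^sup>2) + w\<^sup>2)"
    proof -
      have "0 \<le> C*(real n*(\<Sum>i=0..n. (u i)\<^sup>2))" "0 \<le> C*(real n*w\<^sup>2)"
        using C by (simp_all add: sum_nonneg)
      then show ?thesis by (simp add: algebra_simps)
    qed
    finally show ?thesis .
  qed
  finally show ?thesis unfolding C_def by (simp add: algebra_simps)
qed

lemma lyap_deriv_transfer_le: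
  assumes z: "z = (\<Sum>i=0..n. u i) + w" and d: "0 \<le> \<delta>" "\<delta> \<le> \<delta>_lyap"
    and Sn: "Sn_min \<le> Se n" "Se n \<le> 2" and Smid: "\<forall>i\<in>{1..<n}. \<bar>Se i\<bar> \<le> \<delta>/\<mu>"
  shows "lyap_deriv_transfer \<delta> Se u w \<le> lyap_rate/2 * lyap_norm u w z"
proof -
  note pos = lyap_consts_pos
  define P where "P = (\<Sum>i=0..n. (u i)\<^sup>2) + w\<^sup>2"
  have P: "0 \<le> P" unfolding P_def by (simp add: sum_nonneg)
  have k: "0 \<le> lyap_k Se" "lyap_k Se \<le> k_max" using lyap_k_bounds[of Se, OF Sn] pos by auto
  have "(\<Sum>i\<in>{1..<n}. (1 - p (i-1))*\<delta>*u i*u (i-1)) \<le> \<delta>*P"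
    using mid_transfer_le[OF d(1), of u] mult_nonneg_nonneg[OF d(1) zero_le_power2[of w]]
    unfolding P_def distrib_left by linarith
  then have "lyap_B*(\<Sum>i\<in>{1..<n}. (1 - p (i-1))*\<delta>*u i*u (i-1)) \<le> lyap_B*(\<delta>*P)"
    using pos by (intro mult_left_mono) auto
  moreover have "lyap_B*(- (\<Sum>i\<in>{1..<n}. \<beta> i*Se i*u i*w)) \<le> lyap_B*(\<beta> n*real n/\<mu>*\<delta>*P)"
    using mid_infection_dev_le[OF d(1) Smid, of u w] pos unfolding P_def by (intro mult_left_mono) auto
  ultimately have "lyap_deriv_transfer \<delta> Se u w \<le> transfer_coeff*\<delta>*P"
    using inflow_n_term_le[OF d(1) k, of u w]
    unfolding lyap_deriv_transfer_def transfer_coeff_def P_def[symmetric]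
    by (simp add: algebra_simps)
  also have "\<dots> \<le> transfer_coeff*\<delta>*(5*real n*lyap_norm u w z)"
    using sum_sq_le_lyap_norm[OF z] pos d unfolding P_def by (intro mult_left_mono) auto
  also have "\<dots> \<le> lyap_rate/2 * lyap_norm u w z"
  proof -
    have "\<delta>*(10*real n*transfer_coeff) \<le> lyap_rate"
      using d pos n_pos unfolding \<delta>_lyap_def by (simp add: le_divide_eq)
    from mult_right_mono[OF this lyap_norm_nonneg]
    have "\<delta>*(10*real n*transfer_coeff) * lyap_norm u w z \<le> lyap_rate * lyap_norm u w z" .
    moreover have "transfer_coeff*\<delta>*(5*real n*lyap_norm u w z)
        = \<delta>*(10*real n*transfer_coeff) * lyap_norm u w z / 2"
      by (simp add: algebra_simps)
    ultimately show ?thesis by linarith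
  qed
  finally show ?thesis .
qed

lemma lyap_deriv_le:
  assumes z: "z = (\<Sum>i=0..n. u i) + w" and d: "0 \<le> \<delta>" "\<delta> \<le> \<delta>_lyap"
    and I: "0 \<le> I" "I \<le> 2" and Sn: "Sn_min \<le> Se n" "Se n \<le> 2"
    and Smid: "\<forall>i\<in>{1..<n}. \<bar>Se i\<bar> \<le> \<delta>/\<mu>"
    and cubic: "w/Iw*(I*force_dev u) - w*force_dev u \<le> young_w * w\<^sup>2"
  shows "lyap_deriv \<delta> Iw Se u w z I \<le> - (lyap_rate/2) * lyap_norm u w z"
proof -
  have "Se n \<noteq> 0" using Sn lyap_consts_pos by auto
  then show ?thesis
    using lyap_deriv_split[OF z] lyap_deriv_main_le[where Se=Se and u=u and w=w and z=z, OF d(1) I Sn]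
      lyap_deriv_transfer_le[OF z d Sn Smid] cubic
    by simp
qed

definition lyap_lower :: real where
  "lyap_lower = min (min (k_min/4) (1/4)) (lyap_B/2)"

definition lyap_upper :: "real \<Rightarrow> real" where
  "lyap_upper Iw = k_max/2 + 1/(2*Iw) + 1/2 + lyap_B/2"

lemma lyap_lower_pos: "lyap_lower > 0"
  unfolding lyap_lower_def using lyap_consts_pos by simp

lemma lyap_ge:
  assumes "0 < Iw" "Iw \<le> 1" "Sn_min \<le> Se n" "Se n \<le> 2"
  shows "lyap_lower * lyap_norm u w z \<le> lyap Iw Se u w z"
proof -
  define k where "k = lyap_k Se"
  have k: "k_min \<le> k" using lyap_k_bounds[of Se] assms unfolding k_def by simp
  then have kpos: "k > 0" using lyap_consts_pos by linarith
  have "- lyap_eps*u n*w \<le> (k/4)*(u n)\<^sup>2 + lyap_eps\<^sup>2/(4*(k/4))*w\<^sup>2"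
    by (rule mult_le_weighted_squares) (use kpos lyap_consts_pos in auto)
  moreover have "lyap_eps\<^sup>2/(4*(k/4)) \<le> 1/4"
  proof -
    have "lyap_eps*lyap_eps \<le> (k/2)*(1/2)"
      using lyap_eps_le k lyap_consts_pos by (intro mult_mono) auto
    then show ?thesis using kpos by (simp add: power2_eq_square divide_le_eq)
  qed
  then have "lyap_eps\<^sup>2/(4*(k/4))*w\<^sup>2 \<le> 1/4*w\<^sup>2" by (intro mult_right_mono) auto
  moreover have "- lyap_eps*u n*w = - (lyap_eps*(u n*w))" by simp
  ultimately have cross: "- (lyap_eps*(u n*w)) \<le> k/4*(u n)\<^sup>2 + 1/4*w\<^sup>2" by linarith
  have "w\<^sup>2*Iw \<le> w\<^sup>2" using assms mult_left_mono[of Iw 1 "w\<^sup>2"] by simp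
  then have w: "1/2*w\<^sup>2 \<le> w\<^sup>2/(2*Iw)" using assms by (simp add: field_simps)
  have low: "lyap_lower \<le> k/4" "lyap_lower \<le> 1/4" "lyap_lower \<le> lyap_B/2"
    unfolding lyap_lower_def using k by auto
  have "lyap_lower*(u n)\<^sup>2 \<le> k/4*(u n)\<^sup>2" by (rule mult_right_mono[OF low(1)]) simp
  moreover have "lyap_lower*w\<^sup>2 \<le> 1/4*w\<^sup>2" by (rule mult_right_mono[OF low(2)]) simp
  moreover have "lyap_lower*(mid_sq u + z\<^sup>2) \<le> lyap_B/2*(mid_sq u + z\<^sup>2)"
    by (rule mult_right_mono[OF low(3)]) (simp add: mid_sq_nonneg)
  moreover have "lyap_lower * lyap_norm u w z
      = lyap_lower*(u n)\<^sup>2 + lyap_lower*w\<^sup>2 + lyap_lower*(mid_sq u + z\<^sup>2)"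
    "k/2*(u n)\<^sup>2 = k/4*(u n)\<^sup>2 + k/4*(u n)\<^sup>2"
    unfolding lyap_norm_def by (simp_all add: algebra_simps)
  ultimately show ?thesis
    using cross w unfolding lyap_def k_def[symmetric] by linarith
qed

lemma lyap_le:
  assumes "0 < Iw" "Sn_min \<le> Se n" "Se n \<le> 2"
  shows "lyap Iw Se u w z \<le> lyap_upper Iw * lyap_norm u w z"
proof -
  define k where "k = lyap_k Se"
  have k: "k \<le> k_max" using lyap_k_bounds[of Se] assms unfolding k_def by simp
  have "lyap_eps*u n*w \<le> lyap_eps/2*(u n)\<^sup>2 + lyap_eps/2*w\<^sup>2"
    by (rule mult_le_half_squares) (use lyap_consts_pos in simp)
  then have cross: "lyap_eps*(u n*w) \<le> 1/4*(u n)\<^sup>2 + 1/4*w\<^sup>2"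
    using lyap_eps_le mult_right_mono[of lyap_eps "1/2" "(u n)\<^sup>2"]
      mult_right_mono[of lyap_eps "1/2" "w\<^sup>2"]
    by (simp add: mult.assoc)
  have pos: "0 \<le> 1/(2*Iw)" "0 \<le> k_max" "0 \<le> lyap_B" using assms lyap_consts_pos by auto
  have "k/2 + 1/4 \<le> lyap_upper Iw" unfolding lyap_upper_def using k pos by linarith
  then have "(k/2 + 1/4)*(u n)\<^sup>2 \<le> lyap_upper Iw*(u n)\<^sup>2" by (rule mult_right_mono) simp
  moreover have "(1/(2*Iw) + 1/4)*w\<^sup>2 \<le> lyap_upper Iw*w\<^sup>2"
    unfolding lyap_upper_def using pos by (intro mult_right_mono) auto
  moreover have "lyap_B/2*(mid_sq u + z\<^sup>2) \<le> lyap_upper Iw*(mid_sq u + z\<^sup>2)"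
    unfolding lyap_upper_def using pos mid_sq_nonneg[of u] by (intro mult_right_mono) auto
  moreover have "lyap_upper Iw * lyap_norm u w z
      = lyap_upper Iw*(u n)\<^sup>2 + lyap_upper Iw*w\<^sup>2 + lyap_upper Iw*(mid_sq u + z\<^sup>2)"
    "(k/2 + 1/4)*(u n)\<^sup>2 = k/2*(u n)\<^sup>2 + 1/4*(u n)\<^sup>2"
    "(1/(2*Iw) + 1/4)*w\<^sup>2 = w\<^sup>2/(2*Iw) + 1/4*w\<^sup>2"
    unfolding lyap_norm_def by (simp_all add: algebra_simps)
  ultimately show ?thesis
    using cross unfolding lyap_def k_def[symmetric] by linarith
qed

lemma Sdot_eq_Sdev:
  assumes eq: "endemic_eq n \<delta> \<omega> r \<mu> p \<beta> Se Ie" and i: "1 \<le> i" "i \<le> n"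
  shows "Sdot n \<delta> \<omega> r \<mu> p \<beta> S I i = Sdev \<delta> Se (\<lambda>j. S j - Se j) (I - Ie) I i"
proof -
  have z: "Sdot n \<delta> \<omega> r \<mu> p \<beta> Se Ie i = 0" using endemic_eq_facts(1)[OF eq] i by auto
  have "Sdot n \<delta> \<omega> r \<mu> p \<beta> S I i = Sdot n \<delta> \<omega> r \<mu> p \<beta> S I i - Sdot n \<delta> \<omega> r \<mu> p \<beta> Se Ie i"
    using z by simp
  also have "\<dots> = Sdev \<delta> Se (\<lambda>j. S j - Se j) (I - Ie) I i"
  proof (cases "i < n")
    case True
    then show ?thesis using i unfolding Sdot_def Sdev_def by (simp add: algebra_simps)
  next
    case False
    then have "i = n" using i by simp
    then show ?thesis using i unfolding Sdot_def Sdev_def by (simp add: algebra_simps)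
  qed
  finally show ?thesis .
qed

lemma Idot_eq_force_dev:
  assumes eq: "endemic_eq n \<delta> \<omega> r \<mu> p \<beta> Se Ie"
  shows "Idot n r \<mu> \<beta> S I = I * force_dev (\<lambda>j. S j - Se j)"
proof -
  have "force_dev (\<lambda>j. S j - Se j) = (\<Sum>i=0..n. \<beta> i * S i) - (\<Sum>i=0..n. \<beta> i * Se i)"
    unfolding force_dev_def by (simp add: algebra_simps sum_subtractf)
  hence y: "force_dev (\<lambda>j. S j - Se j) = (\<Sum>i=0..n. \<beta> i * S i) - (r + \<mu>)" using endemic_eq_facts(2)[OF eq] by simp
  show ?thesis unfolding Idot_def y by (simp add: algebra_simps)
qed

lemma total_dev_deriv:
  assumes eq: "endemic_eq n \<delta> \<omega> r \<mu> p \<beta> Se Ie"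
  shows "(\<Sum>i=0..n. Sdot n \<delta> \<omega> r \<mu> p \<beta> S I i) + Idot n r \<mu> \<beta> S I
     = -\<mu> * ((\<Sum>j=0..n. S j - Se j) + (I - Ie))"
proof -
  have a: "(\<Sum>j=0..n. S j - Se j) = (\<Sum>j=0..n. S j) - (\<Sum>j=0..n. Se j)" by (simp add: sum_subtractf)
  have b: "(\<Sum>i=0..n. Sdot n \<delta> \<omega> r \<mu> p \<beta> S I i) + Idot n r \<mu> \<beta> S I = \<mu> - \<mu> * ((\<Sum>i=0..n. S i) + I)"
    using total_population_deriv[where n=n and p=p, OF n_pos p_0] by blast
  have h: "(\<Sum>i=0..n. S i) + I = ((\<Sum>j=0..n. S j - Se j) + (I - Ie)) + 1"
    using a endemic_eq_facts(3)[OF eq] by linarith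
  show ?thesis unfolding b h by (simp add: algebra_simps)
qed

lemma lyap_has_derivative:
  assumes eq: "endemic_eq n \<delta> \<omega> r \<mu> p \<beta> Se Ie"
    and sol: "ode_sol n \<delta> \<omega> r \<mu> p \<beta> D S I" and t: "t \<in> D"
  shows "((\<lambda>\<tau>. lyap Iw Se (\<lambda>j. S \<tau> j - Se j) (I \<tau> - Ie) ((\<Sum>j=0..n. S \<tau> j - Se j) + (I \<tau> - Ie)))
     has_real_derivative
       lyap_deriv \<delta> Iw Se (\<lambda>j. S t j - Se j) (I t - Ie) ((\<Sum>j=0..n. S t j - Se j) + (I t - Ie)) (I t))
     (at t within D)"
proof -
  define u where "u = (\<lambda>j. S t j - Se j)"
  define w where "w = I t - Ie"
  define z where "z = (\<Sum>j=0..n. S t j - Se j) + (I t - Ie)"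
  define Sd where "Sd = Sdot n \<delta> \<omega> r \<mu> p \<beta> (S t) (I t)"
  define Id where "Id = I t * force_dev u"
  have dU: "((\<lambda>\<tau>. S \<tau> i - Se i) has_real_derivative Sd i) (at t within D)" if "i \<le> n" for i
    using DERIV_diff[OF _ DERIV_const] sol t that unfolding ode_sol_def Sd_def by fastforce
  have dW: "((\<lambda>\<tau>. I \<tau> - Ie) has_real_derivative Id) (at t within D)"
    using DERIV_diff[OF _ DERIV_const] sol t Idot_eq_force_dev[OF eq]
    unfolding ode_sol_def Id_def u_def by fastforce
  have "((\<lambda>\<tau>. (\<Sum>j=0..n. S \<tau> j - Se j) + (I \<tau> - Ie)) has_real_derivative (\<Sum>j=0..n. Sd j) + Id)
      (at t within D)"
    by (intro DERIV_add DERIV_sum dW dU) auto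
  moreover have "(\<Sum>j=0..n. Sd j) + Id = -\<mu> * z"
    using total_dev_deriv[OF eq] Idot_eq_force_dev[OF eq] unfolding Sd_def Id_def z_def u_def by simp
  ultimately have dZ: "((\<lambda>\<tau>. (\<Sum>j=0..n. S \<tau> j - Se j) + (I \<tau> - Ie)) has_real_derivative -\<mu> * z)
      (at t within D)" by simp
  have sq: "((\<lambda>\<tau>. (f \<tau>)\<^sup>2) has_real_derivative 2 * (f' * f t)) (at t within D)"
    if "(f has_real_derivative f') (at t within D)" for f f'
    using DERIV_power[OF that, of 2] by simp
  have "((\<lambda>\<tau>. lyap Iw Se (\<lambda>j. S \<tau> j - Se j) (I \<tau> - Ie) ((\<Sum>j=0..n. S \<tau> j - Se j) + (I \<tau> - Ie)))
     has_real_derivative lyap_k Se/2*(2*(Sd n * u n)) + 2*(Id*w)/(2*Iw) + lyap_eps*(Sd n * w + Id * u n)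
        + lyap_B/2*((\<Sum>i\<in>{1..<n}. 2*(Sd i * u i)) + 2*(-\<mu> * z * z))) (at t within D)"
    unfolding lyap_def mid_sq_def u_def w_def z_def
    by (intro DERIV_add DERIV_cmult DERIV_cdivide DERIV_mult DERIV_sum sq dU dW dZ[unfolded z_def]) auto
  moreover have Sdev: "Sd i = Sdev \<delta> Se u w (I t) i" if "1 \<le> i" "i \<le> n" for i
    unfolding Sd_def u_def w_def using Sdot_eq_Sdev[OF eq that] .
  moreover have "(\<Sum>i\<in>{1..<n}. 2*(Sd i * u i)) = 2*(\<Sum>i\<in>{1..<n}. u i * Sdev \<delta> Se u w (I t) i)"
    unfolding sum_distrib_left using Sdev by (intro sum.cong) auto
  ultimately show ?thesis
    using Sdev[OF n_pos order_refl]
    unfolding lyap_deriv_def Id_def z_def u_def[symmetric] w_def[symmetric]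
    by (simp add: algebra_simps power2_eq_square)
qed

lemma force_dev_sq_le: "(force_dev u)\<^sup>2 \<le> (real n + 1) * (\<beta> n)\<^sup>2 * (\<Sum>i=0..n. (u i)\<^sup>2)"
proof -
  have "(force_dev u)\<^sup>2 \<le> (\<Sum>i=0..n. (\<beta> i)\<^sup>2) * (\<Sum>i=0..n. (u i)\<^sup>2)"
    unfolding force_dev_def by (rule Cauchy_Schwarz_ineq_sum)
  moreover have "0 \<le> \<beta> i \<and> \<beta> i \<le> \<beta> n" if "i \<le> n" for i
    using \<beta>_bounds[OF that] \<beta>_0_nonneg by auto
  then have "(\<Sum>i=0..n. (\<beta> i)\<^sup>2) \<le> of_nat (card {0..n}) * (\<beta> n)\<^sup>2"
    by (intro sum_bounded_above power_mono) auto
  ultimately show ?thesis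
    by (simp add: mult_right_mono sum_nonneg order_trans)
qed

end

section \<open>Stability and uniqueness\<close>

locale waning_immunity_endemic = waning_immunity +
  fixes \<delta> :: real and Se :: "nat \<Rightarrow> real" and Ie :: real
  assumes endemic: "endemic_eq n \<delta> \<omega> r \<mu> p \<beta> Se Ie"
    and \<delta>_nonneg: "0 \<le> \<delta>" and \<delta>_small: "\<delta> \<le> \<delta>_lyap"
    and Se_n_bounds: "Sn_min \<le> Se n" "Se n \<le> 2"
    and Se_mid_bound: "\<forall>i\<in>{1..<n}. \<bar>Se i\<bar> \<le> \<delta>/\<mu>"
begin

definition V :: "(nat \<Rightarrow> real) \<Rightarrow> real \<Rightarrow> real" where
  "V S I = lyap Ie Se (\<lambda>j. S j - Se j) (I - Ie) ((\<Sum>j=0..n. S j - Se j) + (I - Ie))"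

definition V' :: "(nat \<Rightarrow> real) \<Rightarrow> real \<Rightarrow> real" where
  "V' S I = lyap_deriv \<delta> Ie Se (\<lambda>j. S j - Se j) (I - Ie) ((\<Sum>j=0..n. S j - Se j) + (I - Ie)) I"

definition Q :: "(nat \<Rightarrow> real) \<Rightarrow> real \<Rightarrow> real" where
  "Q S I = lyap_norm (\<lambda>j. S j - Se j) (I - Ie) ((\<Sum>j=0..n. S j - Se j) + (I - Ie))"

text \<open>Q \<le> Q_max keeps I in [0, 2 I*] and makes the cubic term of V' at most young_w (I - I*)^2.\<close>

definition Q_max :: real where
  "Q_max = min (Ie\<^sup>2) ((young_w*Ie)\<^sup>2 / (5*real n*(real n + 1)*(\<beta> n)\<^sup>2))"

definition decay_rate :: real where
  "decay_rate = lyap_rate / (2 * lyap_upper Ie)"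

lemma Ie_bounds: "0 < Ie" "Ie \<le> 1"
  using endemic_eq_facts(4,5)[OF endemic] by auto

lemma lyap_upper_pos: "lyap_upper Ie > 0"
  unfolding lyap_upper_def using lyap_consts_pos Ie_bounds by (simp add: add_pos_pos)

lemma decay_rate_pos: "decay_rate > 0"
  unfolding decay_rate_def using lyap_upper_pos lyap_consts_pos by simp

lemma Q_max_pos: "Q_max > 0"
  unfolding Q_max_def using Ie_bounds lyap_consts_pos \<beta>_n_pos n_pos by simp

lemma V_Q_bounds: "lyap_lower * Q S I \<le> V S I" "V S I \<le> lyap_upper Ie * Q S I" "0 \<le> Q S I" "0 \<le> V S I"
proof -
  show "lyap_lower * Q S I \<le> V S I"
    unfolding V_def Q_def by (rule lyap_ge) (use Ie_bounds Se_n_bounds in auto)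
  moreover show "V S I \<le> lyap_upper Ie * Q S I"
    unfolding V_def Q_def by (rule lyap_le) (use Ie_bounds Se_n_bounds in auto)
  moreover show "0 \<le> Q S I" unfolding Q_def by (rule lyap_norm_nonneg)
  ultimately show "0 \<le> V S I" using lyap_lower_pos by (meson mult_nonneg_nonneg less_imp_le order_trans)
qed

lemma sum_sq_dev_le_Q: "(\<Sum>i=0..n. (S i - Se i)\<^sup>2) + (I - Ie)\<^sup>2 \<le> 5 * real n * Q S I"
  unfolding Q_def by (rule sum_sq_le_lyap_norm) simp

lemma dev_sq_le_Q:
  "i \<le> n \<Longrightarrow> (S i - Se i)\<^sup>2 \<le> 5 * real n * Q S I" "(I - Ie)\<^sup>2 \<le> 5 * real n * Q S I"
  "(I - Ie)\<^sup>2 \<le> Q S I"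
proof -
  have "0 \<le> (\<Sum>i=0..n. (S i - Se i)\<^sup>2)" by (simp add: sum_nonneg)
  then show "(I - Ie)\<^sup>2 \<le> 5 * real n * Q S I" using sum_sq_dev_le_Q[of S I] by linarith
  show "i \<le> n \<Longrightarrow> (S i - Se i)\<^sup>2 \<le> 5 * real n * Q S I"
    using sq_le_sum_sq[of i "\<lambda>j. S j - Se j"] sum_sq_dev_le_Q[of S I] zero_le_power2[of "I - Ie"]
    by linarith
  show "(I - Ie)\<^sup>2 \<le> Q S I" unfolding Q_def lyap_norm_def using mid_sq_nonneg by simp
qed

lemma cubic_term_le:
  assumes "Q S I \<le> Q_max"
  shows "(I - Ie)/Ie*(I*force_dev (\<lambda>j. S j - Se j)) - (I - Ie)*force_dev (\<lambda>j. S j - Se j)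
    \<le> young_w * (I - Ie)\<^sup>2"
proof -
  define Y where "Y = force_dev (\<lambda>j. S j - Se j)"
  have pos: "0 < (real n + 1) * (\<beta> n)\<^sup>2" "0 < 5*real n" using \<beta>_n_pos n_pos by auto
  have "Y\<^sup>2 \<le> (real n + 1) * (\<beta> n)\<^sup>2 * (5 * real n * Q S I)"
    using force_dev_sq_le[of "\<lambda>j. S j - Se j"] sum_sq_dev_le_Q[of S I] pos unfolding Y_def
    by (smt (verit) mult_left_mono zero_le_power2)
  also have "\<dots> \<le> (real n + 1) * (\<beta> n)\<^sup>2 * (5 * real n * ((young_w*Ie)\<^sup>2 / (5*real n*(real n + 1)*(\<beta> n)\<^sup>2)))"
    using assms pos unfolding Q_max_def by (intro mult_left_mono) auto
  also have "\<dots> = (young_w*Ie)\<^sup>2"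
  proof -
    define D where "D = 5*real n*(real n + 1)*(\<beta> n)\<^sup>2"
    have "D \<noteq> 0" unfolding D_def using \<beta>_n_pos n_pos by simp
    have "(real n + 1) * (\<beta> n)\<^sup>2 * (5 * real n * ((young_w*Ie)\<^sup>2 / D)) = D * ((young_w*Ie)\<^sup>2 / D)"
      unfolding D_def by (simp add: algebra_simps)
    then show ?thesis unfolding D_def[symmetric] using \<open>D \<noteq> 0\<close> by simp
  qed
  finally have "Y \<le> young_w*Ie"
    using lyap_consts_pos Ie_bounds by (simp add: power2_le_iff_abs_le)
  then have "(I - Ie)\<^sup>2 * (Y/Ie) \<le> (I - Ie)\<^sup>2 * young_w"
    using Ie_bounds by (intro mult_left_mono) (auto simp: divide_le_eq)
  moreover have "(I - Ie)/Ie*(I*Y) - (I - Ie)*Y = (I - Ie)\<^sup>2 * (Y/Ie)"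
    using Ie_bounds by (simp add: field_simps power2_eq_square)
  ultimately show ?thesis unfolding Y_def by (simp add: mult.commute)
qed

lemma V'_le_near:
  assumes "Q S I \<le> Q_max"
  shows "V' S I \<le> - (lyap_rate/2) * Q S I"
proof -
  have "(I - Ie)\<^sup>2 \<le> Ie\<^sup>2" using dev_sq_le_Q(3)[of I S] assms unfolding Q_max_def by simp
  then have "\<bar>I - Ie\<bar> \<le> Ie" using Ie_bounds by (simp add: power2_le_iff_abs_le)
  then have "0 \<le> I" "I \<le> 2" using Ie_bounds by auto
  then show ?thesis
    unfolding V'_def Q_def
    using lyap_deriv_le[OF _ \<delta>_nonneg \<delta>_small _ _ Se_n_bounds Se_mid_bound cubic_term_le[OF assms]]
    by simp
qed

lemma V_exp_decay:
  assumes sol: "ode_sol n \<delta> \<omega> r \<mu> p \<beta> {0..<T} S I"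
    and V0: "V (S 0) (I 0) < lyap_lower * Q_max" and t: "t \<in> {0..<T}"
  shows "V (S t) (I t) * exp (decay_rate*t) \<le> V (S 0) (I 0)"
proof -
  define h where "h \<tau> = V (S \<tau>) (I \<tau>) * exp (decay_rate*\<tau>)" for \<tau>
  define h' where "h' \<tau> = (V' (S \<tau>) (I \<tau>) + decay_rate * V (S \<tau>) (I \<tau>)) * exp (decay_rate*\<tau>)" for \<tau>
  have "(h has_real_derivative h' \<tau>) (at \<tau> within {0..<T})" if "\<tau> \<in> {0..<T}" for \<tau>
  proof -
    have "((\<lambda>\<tau>. exp (decay_rate*\<tau>)) has_real_derivative exp (decay_rate*\<tau>) * decay_rate)
        (at \<tau> within {0..<T})"
      by (auto intro!: derivative_eq_intros)
    from DERIV_mult[OF lyap_has_derivative[OF endemic sol that, of Ie] this] show ?thesis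
      unfolding h_def[abs_def] h'_def V_def V'_def by (simp add: algebra_simps)
  qed
  moreover have "h' \<tau> \<le> 0" if "\<tau> \<in> {0..<T}" "h \<tau> \<le> lyap_lower * Q_max" for \<tau>
  proof -
    have "1 \<le> exp (decay_rate*\<tau>)" using that(1) decay_rate_pos by simp
    then have "V (S \<tau>) (I \<tau>) \<le> h \<tau>"
      unfolding h_def using mult_left_mono[OF _ V_Q_bounds(4)] by fastforce
    then have "lyap_lower * Q (S \<tau>) (I \<tau>) \<le> lyap_lower * Q_max"
      using V_Q_bounds(1)[of "S \<tau>" "I \<tau>"] that(2) by linarith
    then have "Q (S \<tau>) (I \<tau>) \<le> Q_max" using lyap_lower_pos by simp
    then have "V' (S \<tau>) (I \<tau>) \<le> - (lyap_rate/2) * Q (S \<tau>) (I \<tau>)" by (rule V'_le_near)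
    moreover have "decay_rate * V (S \<tau>) (I \<tau>) \<le> (lyap_rate/2) * Q (S \<tau>) (I \<tau>)"
      using mult_left_mono[OF V_Q_bounds(2) less_imp_le[OF decay_rate_pos]] lyap_upper_pos
      unfolding decay_rate_def by simp
    ultimately show ?thesis unfolding h'_def by (simp add: mult_nonpos_nonneg)
  qed
  ultimately have "h t \<le> h 0"
    using DERIV_nonpos_below_level_imp_le_initial[of T h h' "lyap_lower * Q_max" t] V0 t
    by (auto simp: h_def)
  then show ?thesis unfolding h_def by simp
qed

lemma Q_le_initial_dist:
  assumes "\<forall>i\<le>n. \<bar>S i - Se i\<bar> < \<eta>" "\<bar>I - Ie\<bar> < \<eta>"
  shows "Q S I \<le> 2*(real n + 2)\<^sup>2*\<eta>\<^sup>2"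
proof -
  have sq: "x\<^sup>2 \<le> \<eta>\<^sup>2" if "\<bar>x\<bar> < \<eta>" for x :: real
    using that by (simp add: power2_le_iff_abs_le)
  have "mid_sq (\<lambda>j. S j - Se j) \<le> of_nat (card {1..<n}) * \<eta>\<^sup>2"
    unfolding mid_sq_def using assms(1) sq by (intro sum_bounded_above) auto
  also have "\<dots> \<le> real n * \<eta>\<^sup>2" by (intro mult_right_mono) auto
  finally have mid: "mid_sq (\<lambda>j. S j - Se j) \<le> real n * \<eta>\<^sup>2" .
  have "\<bar>(\<Sum>j=0..n. S j - Se j) + (I - Ie)\<bar> \<le> (\<Sum>j=0..n. \<bar>S j - Se j\<bar>) + \<bar>I - Ie\<bar>"
    by (metis (no_types) abs_triangle_ineq order_trans add_mono order_refl sum_abs)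
  also have "\<dots> \<le> of_nat (card {0..n}) * \<eta> + \<eta>"
    using assms by (intro add_mono sum_bounded_above) (auto simp: less_imp_le)
  finally have "((\<Sum>j=0..n. S j - Se j) + (I - Ie))\<^sup>2 \<le> ((real n + 2)*\<eta>)\<^sup>2"
    using assms(2) by (simp add: power2_le_iff_abs_le algebra_simps)
  then have total: "((\<Sum>j=0..n. S j - Se j) + (I - Ie))\<^sup>2 \<le> (real n + 2)\<^sup>2*\<eta>\<^sup>2"
    by (simp only: power_mult_distrib)
  have "2 + real n \<le> (real n + 2)\<^sup>2" by (simp add: power2_eq_square algebra_simps)
  then have "(2 + real n)*\<eta>\<^sup>2 \<le> (real n + 2)\<^sup>2*\<eta>\<^sup>2" by (intro mult_right_mono) auto
  then have "2*\<eta>\<^sup>2 + real n*\<eta>\<^sup>2 \<le> (real n + 2)\<^sup>2*\<eta>\<^sup>2" by (simp add: algebra_simps)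
  moreover have "(S n - Se n)\<^sup>2 \<le> \<eta>\<^sup>2" "(I - Ie)\<^sup>2 \<le> \<eta>\<^sup>2" using assms sq by auto
  ultimately show ?thesis
    using mid total unfolding Q_def lyap_norm_def by linarith
qed

lemma V_small_near:
  assumes "c > 0"
  obtains \<eta> where "\<eta> > 0"
    "\<And>S I. \<forall>i\<le>n. \<bar>S i - Se i\<bar> < \<eta> \<Longrightarrow> \<bar>I - Ie\<bar> < \<eta> \<Longrightarrow> V S I < c"
proof
  define K where "K = 2*(real n + 2)\<^sup>2"
  have K: "K > 0" unfolding K_def by simp
  define \<eta> where "\<eta> = sqrt (c / (2 * lyap_upper Ie * K))"
  have arg: "c / (2 * lyap_upper Ie * K) > 0" using assms lyap_upper_pos K by simp
  then show "\<eta> > 0" unfolding \<eta>_def by simp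
  fix S I assume "\<forall>i\<le>n. \<bar>S i - Se i\<bar> < \<eta>" "\<bar>I - Ie\<bar> < \<eta>"
  then have "Q S I \<le> K * \<eta>\<^sup>2" using Q_le_initial_dist unfolding K_def by blast
  then have "V S I \<le> lyap_upper Ie * (K * \<eta>\<^sup>2)"
    using V_Q_bounds(2)[of S I] lyap_upper_pos by (meson mult_left_mono order_trans less_imp_le)
  also have "\<dots> = c / 2" unfolding \<eta>_def using arg lyap_upper_pos K by (simp add: field_simps)
  finally show "V S I < c" using assms by simp
qed

lemma dev_less_if_Q_less:
  assumes "\<epsilon> > 0" "Q S I < \<epsilon>\<^sup>2 / (5 * real n)"
  shows "(\<forall>i\<le>n. \<bar>S i - Se i\<bar> < \<epsilon>) \<and> \<bar>I - Ie\<bar> < \<epsilon>"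
proof -
  have "5 * real n * Q S I < \<epsilon>\<^sup>2" using assms(2) n_pos by (simp add: field_simps)
  then have "(I - Ie)\<^sup>2 < \<epsilon>\<^sup>2" "\<And>i. i \<le> n \<Longrightarrow> (S i - Se i)\<^sup>2 < \<epsilon>\<^sup>2"
    using dev_sq_le_Q(1,2)[where S=S and I=I] by (meson le_less_trans)+
  moreover have "\<bar>x\<bar> < \<epsilon>" if "x\<^sup>2 < \<epsilon>\<^sup>2" for x
    using power2_less_imp_less[of "\<bar>x\<bar>" \<epsilon>] that assms(1) by simp
  ultimately show ?thesis by blast
qed

lemma stable:
  assumes "\<epsilon> > 0"
  shows "\<exists>\<eta>>0. \<forall>T>0. \<forall>S I. ode_sol n \<delta> \<omega> r \<mu> p \<beta> {0..<T} S I
    \<and> (\<forall>i\<le>n. \<bar>S 0 i - Se i\<bar> < \<eta>) \<and> \<bar>I 0 - Ie\<bar> < \<eta>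
    \<longrightarrow> (\<forall>t\<in>{0..<T}. (\<forall>i\<le>n. \<bar>S t i - Se i\<bar> < \<epsilon>) \<and> \<bar>I t - Ie\<bar> < \<epsilon>)"
proof -
  define c where "c = lyap_lower * min Q_max (\<epsilon>\<^sup>2 / (5 * real n))"
  have "c > 0" unfolding c_def using lyap_lower_pos Q_max_pos assms n_pos by simp
  then obtain \<eta> where "\<eta> > 0"
    and small: "\<And>S I. \<forall>i\<le>n. \<bar>S i - Se i\<bar> < \<eta> \<Longrightarrow> \<bar>I - Ie\<bar> < \<eta> \<Longrightarrow> V S I < c"
    using V_small_near by blast
  have "(\<forall>i\<le>n. \<bar>S t i - Se i\<bar> < \<epsilon>) \<and> \<bar>I t - Ie\<bar> < \<epsilon>"
    if sol: "ode_sol n \<delta> \<omega> r \<mu> p \<beta> {0..<T} S I" and t: "t \<in> {0..<T}"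
      and init: "\<forall>i\<le>n. \<bar>S 0 i - Se i\<bar> < \<eta>" "\<bar>I 0 - Ie\<bar> < \<eta>" for T S I t
  proof -
    have V0: "V (S 0) (I 0) < c" using small init by blast
    then have "V (S 0) (I 0) < lyap_lower * Q_max"
      unfolding c_def using lyap_lower_pos by (smt (verit) mult_left_mono min.cobounded1)
    then have "V (S t) (I t) * exp (decay_rate*t) \<le> V (S 0) (I 0)" by (rule V_exp_decay[OF sol _ t])
    moreover have "1 \<le> exp (decay_rate*t)" using t decay_rate_pos by simp
    then have "V (S t) (I t) \<le> V (S t) (I t) * exp (decay_rate*t)"
      using mult_left_mono[OF _ V_Q_bounds(4)] by fastforce
    ultimately have "lyap_lower * Q (S t) (I t) < lyap_lower * (\<epsilon>\<^sup>2 / (5 * real n))"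
      using V0 V_Q_bounds(1)[of "S t" "I t"] lyap_lower_pos unfolding c_def
      by (smt (verit) mult_left_mono min.cobounded2)
    then have "Q (S t) (I t) < \<epsilon>\<^sup>2 / (5 * real n)"
      using lyap_lower_pos by (simp only: mult_less_cancel_left_pos)
    then show ?thesis by (rule dev_less_if_Q_less[OF assms])
  qed
  then show ?thesis using \<open>\<eta> > 0\<close> by blast
qed

lemma Q_exp_bound:
  assumes sol: "ode_sol n \<delta> \<omega> r \<mu> p \<beta> {0..} S I"
    and V0: "V (S 0) (I 0) < lyap_lower * Q_max" and t: "0 \<le> t"
  shows "Q (S t) (I t) \<le> V (S 0) (I 0) / lyap_lower * exp (- (decay_rate*t))"
proof -
  have "ode_sol n \<delta> \<omega> r \<mu> p \<beta> {0..<t+1} S I" by (rule ode_sol_subset[OF sol]) auto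
  then have "V (S t) (I t) * exp (decay_rate*t) \<le> V (S 0) (I 0)" using V_exp_decay V0 t by simp
  then have "V (S t) (I t) \<le> V (S 0) (I 0) * exp (- (decay_rate*t))"
    by (simp add: exp_minus field_simps)
  then show ?thesis
    using V_Q_bounds(1)[of "S t" "I t"] lyap_lower_pos by (simp add: field_simps)
qed

lemma attractive:
  "\<exists>\<eta>>0. \<forall>S I. ode_sol n \<delta> \<omega> r \<mu> p \<beta> {0..} S I
    \<and> (\<forall>i\<le>n. \<bar>S 0 i - Se i\<bar> < \<eta>) \<and> \<bar>I 0 - Ie\<bar> < \<eta>
    \<longrightarrow> (\<forall>i\<le>n. ((\<lambda>t. S t i) \<longlongrightarrow> Se i) at_top) \<and> (I \<longlongrightarrow> Ie) at_top"
proof -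
  obtain \<eta> where "\<eta> > 0" and small: "\<And>S I. \<forall>i\<le>n. \<bar>S i - Se i\<bar> < \<eta> \<Longrightarrow> \<bar>I - Ie\<bar> < \<eta>
      \<Longrightarrow> V S I < lyap_lower * Q_max"
    using V_small_near[of "lyap_lower * Q_max"] lyap_lower_pos Q_max_pos by auto
  have "(\<forall>i\<le>n. ((\<lambda>t. S t i) \<longlongrightarrow> Se i) at_top) \<and> (I \<longlongrightarrow> Ie) at_top"
    if sol: "ode_sol n \<delta> \<omega> r \<mu> p \<beta> {0..} S I"
      and init: "\<forall>i\<le>n. \<bar>S 0 i - Se i\<bar> < \<eta>" "\<bar>I 0 - Ie\<bar> < \<eta>" for S I
  proof -
    define g where "g t = 5 * real n * (V (S 0) (I 0) / lyap_lower * exp (- (decay_rate*t)))" for t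
    have "filterlim (\<lambda>t. decay_rate * t) at_top at_top"
      using decay_rate_pos by (intro filterlim_tendsto_pos_mult_at_top[OF tendsto_const _ filterlim_ident])
    then have "((\<lambda>t. exp (- (decay_rate*t))) \<longlongrightarrow> 0) at_top"
      by (intro filterlim_compose[OF exp_at_bot]) (simp add: filterlim_uminus_at_bot)
    then have g: "(g \<longlongrightarrow> 0) at_top" unfolding g_def by (intro tendsto_mult_right_zero)
    have Q: "\<forall>\<^sub>F t in at_top. 5 * real n * Q (S t) (I t) \<le> g t"
      unfolding eventually_at_top_linorder
    proof (intro exI[of _ 0] allI impI)
      fix t :: real assume "0 \<le> t"
      then show "5 * real n * Q (S t) (I t) \<le> g t"
        unfolding g_def using Q_exp_bound[OF sol small[OF init]] by (intro mult_left_mono) auto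
    qed
    have "((\<lambda>t. S t i - Se i) \<longlongrightarrow> 0) at_top" if "i \<le> n" for i
    proof (rule tendsto_0_if_power2_le[OF _ g])
      show "\<forall>\<^sub>F t in at_top. (S t i - Se i)\<^sup>2 \<le> g t"
        using Q by eventually_elim (rule order_trans[OF dev_sq_le_Q(1)[OF that]])
    qed
    moreover have "((\<lambda>t. I t - Ie) \<longlongrightarrow> 0) at_top"
    proof (rule tendsto_0_if_power2_le[OF _ g])
      show "\<forall>\<^sub>F t in at_top. (I t - Ie)\<^sup>2 \<le> g t"
        using Q by eventually_elim (rule order_trans[OF dev_sq_le_Q(2)])
    qed
    ultimately show ?thesis by (auto simp: LIM_zero_iff)
  qed
  then show ?thesis using \<open>\<eta> > 0\<close> by blast
qed

lemma loc_asymp_stable: "loc_asymp_stable n \<delta> \<omega> r \<mu> p \<beta> Se Ie"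
  unfolding loc_asymp_stable_def using stable attractive by blast

lemma endemic_eq_unique:
  assumes other: "endemic_eq n \<delta> \<omega> r \<mu> p \<beta> S I"
  shows "I = Ie \<and> (\<forall>i\<le>n. S i = Se i)"
proof -
  define u where "u = (\<lambda>j. S j - Se j)"
  define w where "w = I - Ie"
  define z where "z = (\<Sum>j=0..n. S j - Se j) + (I - Ie)"
  have I: "0 < I" "I \<le> 1" using endemic_eq_facts(4,5)[OF other] by auto
  have zdef: "z = (\<Sum>i=0..n. u i) + w" unfolding z_def u_def w_def ..
  have "z = ((\<Sum>i=0..n. S i) + I) - ((\<Sum>i=0..n. Se i) + Ie)"
    unfolding z_def by (simp add: sum_subtractf)
  then have "z = 0" using endemic_eq_facts(3)[OF endemic] endemic_eq_facts(3)[OF other] by simp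
  have Sdev: "Sdev \<delta> Se u w I i = 0" if "1 \<le> i" "i \<le> n" for i
    using endemic_eq_facts(1)[OF other] Sdot_eq_Sdev[OF endemic that, of S I] that
    unfolding u_def w_def by simp
  have "force_dev u = 0"
    using Idot_eq_force_dev[OF endemic, of S I] I
      endemic_eq_facts(2)[OF other] endemic_eq_facts(2)[OF endemic]
    unfolding u_def force_dev_def by (simp add: sum_subtractf algebra_simps)
  \<comment> \<open>weighting w^2 by 1/I instead of 1/Ie removes the cubic term\<close>
  then have "lyap_deriv \<delta> I Se u w z I = 0"
    unfolding lyap_deriv_def using Sdev[OF n_pos order_refl] Sdev \<open>z = 0\<close> by simp
  moreover have "lyap_deriv \<delta> I Se u w z I \<le> - (lyap_rate/2) * lyap_norm u w z"
    using I \<open>force_dev u = 0\<close> lyap_consts_pos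
    by (intro lyap_deriv_le[OF zdef \<delta>_nonneg \<delta>_small _ _ Se_n_bounds Se_mid_bound]) auto
  ultimately have "lyap_norm u w z \<le> 0" using lyap_consts_pos by (simp add: mult_le_0_iff)
  then have "(\<Sum>i=0..n. (u i)\<^sup>2) + w\<^sup>2 \<le> 0"
    using sum_sq_le_lyap_norm[OF zdef] n_pos by (smt (verit) mult_nonneg_nonpos of_nat_0_le_iff)
  moreover have "0 \<le> (\<Sum>i=0..n. (u i)\<^sup>2)" by (simp add: sum_nonneg)
  ultimately have "w = 0" "\<And>i. i \<le> n \<Longrightarrow> u i = 0"
    using sq_le_sum_sq[of _ u] zero_le_power2[of w] by (smt (verit) power2_less_eq_zero_iff)+
  then show ?thesis unfolding u_def w_def by simp
qed

lemma other_endemic_eq_locale: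
  assumes "endemic_eq n \<delta> \<omega> r \<mu> p \<beta> S I"
  shows "waning_immunity_endemic n \<omega> r \<mu> p \<beta> \<delta> S I"
proof -
  have "\<forall>i\<le>n. S i = Se i" using endemic_eq_unique[OF assms] by blast
  then have "S n = Se n" "\<forall>i\<in>{1..<n}. S i = Se i" by auto
  then show ?thesis
    using assms \<delta>_nonneg \<delta>_small Se_n_bounds Se_mid_bound
    by unfold_locales auto
qed

end

context waning_immunity
begin

definition \<delta>_max :: real where
  "\<delta>_max = min (min \<delta>_lyap (\<mu>/2)) (\<mu> * min (equil_residual 0 0) r / (3 * real n * \<beta> n))"

lemma \<delta>_max_pos: "\<delta>_max > 0"
  unfolding \<delta>_max_def
  using lyap_consts_pos \<mu>_pos equil_residual_zero_delta_at_0 r_pos n_pos \<beta>_n_pos by simp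

lemma endemic_equilibrium_exists:
  assumes "0 \<le> \<delta>" "\<delta> < \<delta>_max"
  obtains Se Ie where "waning_immunity_endemic n \<omega> r \<mu> p \<beta> \<delta> Se Ie"
proof -
  have \<delta>: "\<delta> \<le> \<delta>_lyap" "\<delta> \<le> \<mu>/2" using assms unfolding \<delta>_max_def by auto
  define m where "m = min (equil_residual 0 0) r"
  have "\<delta> * (3 * real n * \<beta> n) < \<mu> * m"
    using assms n_pos \<beta>_n_pos unfolding \<delta>_max_def m_def[symmetric] by (simp add: less_divide_eq)
  then have "3*real n*\<beta> n*\<delta>/\<mu> < m"
    using \<mu>_pos by (simp add: divide_less_eq algebra_simps)
  then obtain Ie where Ie: "0 < Ie" "Ie < 1" "equil_residual \<delta> Ie = 0"
    using equil_residual_root[OF assms(1) \<delta>(2)] unfolding m_def by blast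
  have "waning_immunity_endemic n \<omega> r \<mu> p \<beta> \<delta> (equil_profile \<delta> Ie) Ie"
    using equil_profile_endemic[OF assms(1) \<delta>(2) Ie(1) _ Ie(3)] equil_profile_bounds[OF assms(1) \<delta>(2)] Ie
      assms(1) \<delta>(1)
    by unfold_locales auto
  then show ?thesis by (rule that)
qed

end

theorem theorem4:
  fixes n :: nat and \<omega> r \<mu> :: real and p \<beta> :: "nat \<Rightarrow> real"
  assumes "n \<ge> 1" and "\<omega> \<ge> 0" and "r > 0" and "\<mu> > 0"
    and "p 0 = 0" and "\<forall>i\<in>{1..n}. 0 \<le> p i \<and> p i \<le> 1"
    and "0 \<le> \<beta> 0" and "\<forall>i<n. \<beta> i \<le> \<beta> (Suc i)" and "\<beta> 0 < \<beta> n"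
    and "(p n * \<omega> + \<mu>) * (\<mu> + r) < \<beta> 0 * (p n * \<omega>) + \<beta> n * \<mu>"
  shows "\<exists>\<delta>0>0. \<forall>\<delta>. 0 \<le> \<delta> \<and> \<delta> < \<delta>0 \<longrightarrow>
           (\<exists>S I. endemic_eq n \<delta> \<omega> r \<mu> p \<beta> S I \<and>
              (\<forall>S' I'. endemic_eq n \<delta> \<omega> r \<mu> p \<beta> S' I' \<longrightarrow> I' = I \<and> (\<forall>i\<le>n. S' i = S i))) \<and>
           (\<forall>S I. endemic_eq n \<delta> \<omega> r \<mu> p \<beta> S I \<longrightarrow> loc_asymp_stable n \<delta> \<omega> r \<mu> p \<beta> S I)"
proof -
  interpret waning_immunity n \<omega> r \<mu> p \<beta>
    using assms by unfold_locales auto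
  show ?thesis
  proof (intro exI[of _ \<delta>_max] conjI allI impI \<delta>_max_pos)
    fix \<delta> assume "0 \<le> \<delta> \<and> \<delta> < \<delta>_max"
    then obtain Se Ie where E: "waning_immunity_endemic n \<omega> r \<mu> p \<beta> \<delta> Se Ie"
      using endemic_equilibrium_exists by blast
    show "\<exists>S I. endemic_eq n \<delta> \<omega> r \<mu> p \<beta> S I \<and>
        (\<forall>S' I'. endemic_eq n \<delta> \<omega> r \<mu> p \<beta> S' I' \<longrightarrow> I' = I \<and> (\<forall>i\<le>n. S' i = S i))"
      using waning_immunity_endemic.endemic[OF E] waning_immunity_endemic.endemic_eq_unique[OF E]
      by blast
    fix S I assume "endemic_eq n \<delta> \<omega> r \<mu> p \<beta> S I"
    then show "loc_asymp_stable n \<delta> \<omega> r \<mu> p \<beta> S I"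
      using waning_immunity_endemic.loc_asymp_stable waning_immunity_endemic.other_endemic_eq_locale[OF E]
      by blast
  qed
qed

end
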